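(* Let $\gamma\in(0,1]$, let $A$ be a finite alphabet with $d$ letters, and let $\mathbb X=(\mathbb X_{st})_{s,t\in\mathbb R}$ be a $\gamma$-regular $\mathcal H^A_{\sqcup\!\sqcup}$-rough path (a geometric rough path over $\mathbb R^d$). Then $\widetilde{\mathbb X}_{st}:=\mathbb X_{st}\circ\mathfrak a_\ll$ defines a $\gamma$-regular planarly branched rough path, i.e. a $\gamma$-regular $\mathcal H^A_{\mathrm{MKW}}$-rough path.
   Context: $\mathcal H^A_{\sqcup\!\sqcup}$: words on $A$ (basis), graded by length, shuffle product, deconcatenation coproduct. $\mathcal H^A_{\mathrm{MKW}}$: basis the $A$-decorated planar forests (left-to-right ordered sequences of planar rooted trees with decorations in $A$), graded by number of vertices, product = shuffle of forests regarded as words in trees, coproduct $\Delta(\tau)=\sum(\tau|_{V'})^{\sqcup\!\sqcup}\otimes\tau|_{V''}$ over partitions $V(\tau)=V'\sqcup V''$ with $V''$ downward closed for $\ll$ ($\tau|_W$ the induced decorated planar forest; $(\tau|_{V'})^{\sqcup\!\sqcup}$ the shuffle product of the $\tau|_C$ over connected components $C$ of $(V',\ll|_{V'})$). Here $v<w$ iff $v\ne w$ and $v$ lies on the path from a root to $w$, and $\ll$ is the transitive closure of: $v<w$, or $v,w$ children of a common vertex with $v$ right of $w$, or $v,w$ roots with $v$ right of $w$. Planar arborification: $\mathfrak a_\ll(\tau)=\sum\varphi(v_1)\cdots\varphi(v_n)$ over enumerations of $V(\tau)$ with $v_i\ll v_j\Rightarrow i>j$. For a commutative Hopf algebra $\mathcal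 H$ with homogeneous basis $\mathcal B$, a $\gamma$-regular $\mathcal H$-rough path is a family $(\mathbb X_{st})_{s,t\in\mathbb R}$ of linear forms with $\langle\mathbb X_{st},\mathbf 1\rangle=1$, multiplicative ($\langle\mathbb X_{st},\sigma\tau\rangle=\langle\mathbb X_{st},\sigma\rangle\langle\mathbb X_{st},\tau\rangle$), satisfying Chen's relation $\mathbb X_{su}*\mathbb X_{ut}=\mathbb X_{st}$ (convolution w.r.t. the coproduct) and $\sup_{s\ne t}|\langle\mathbb X_{st},\sigma\rangle|/|t-s|^{\gamma|\sigma|}<\infty$ for each $\sigma\in\mathcal B$. *)

theory Defs
  imports Complex_Main "HOL-Library.Multiset"
begin

text \<open>Elements of the Hopf algebras that occur (products and coproducts of basis
elements) are sums of basis elements with multiplicities; they are represented as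
multisets of basis elements.\<close>

definition lin :: "('b \<Rightarrow> real) \<Rightarrow> 'b multiset \<Rightarrow> real" where
  "lin X M = sum_mset (image_mset X M)"

fun shuf :: "'b list \<Rightarrow> 'b list \<Rightarrow> 'b list multiset" where
  "shuf [] ys = {#ys#}"
| "shuf xs [] = {#xs#}"
| "shuf (x # xs) (y # ys) =
     image_mset (Cons x) (shuf xs (y # ys)) + image_mset (Cons y) (shuf (x # xs) ys)"

definition mshuf :: "'b list multiset \<Rightarrow> 'b list multiset \<Rightarrow> 'b list multiset" where
  "mshuf M N = (\<Sum>x\<in>#M. \<Sum>y\<in>#N. shuf x y)"

text \<open>Deconcatenation coproduct of words, as multiset of pairs (left tensor factor, right tensor factor).\<close>

definition deconc :: "'b list \<Rightarrow> ('b list \<times> 'b list) multiset" where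
  "deconc w = mset (map (\<lambda>k. (take k w, drop k w)) [0..<Suc (length w)])"

text \<open>The basis is the type \<open>'b\<close>; \<open>deg\<close> is the grading, \<open>prod\<close> the product of two
basis elements, \<open>cop\<close> the coproduct of a basis element (as a multiset of pairs of
basis elements), \<open>one\<close> the unit. \<open>X s t\<close> is the linear form \<open>\<bbbX>_{st}\<close> given on the basis.
The condition sup |<X_st,sigma>|/|t-s|^(gamma |sigma|) < infinity is written
as existence of a finite bound.\<close>

definition rough_path ::
  "real \<Rightarrow> ('b \<Rightarrow> nat) \<Rightarrow> ('b \<Rightarrow> 'b \<Rightarrow> 'b multiset) \<Rightarrow> ('b \<Rightarrow> ('b \<times> 'b) multiset)
    \<Rightarrow> 'b \<Rightarrow> (real \<Rightarrow> real \<Rightarrow> 'b \<Rightarrow> real) \<Rightarrow> bool" where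
  "rough_path \<gamma> deg mul cop one X \<longleftrightarrow>
     (\<forall>s t. X s t one = 1) \<and>
     (\<forall>s t \<sigma> \<tau>. lin (X s t) (mul \<sigma> \<tau>) = X s t \<sigma> * X s t \<tau>) \<and>
     (\<forall>s u t \<tau>. (\<Sum>p\<in>#cop \<tau>. X s u (fst p) * X u t (snd p)) = X s t \<tau>) \<and>
     (\<forall>\<sigma>. \<exists>C. \<forall>s t. s \<noteq> t \<longrightarrow> \<bar>X s t \<sigma>\<bar> \<le> C * \<bar>t - s\<bar> powr (\<gamma> * real (deg \<sigma>)))"

datatype 'a ptree = PNode 'a "'a ptree list"

type_synonym 'a pforest = "'a ptree list"

fun label :: "'a ptree \<Rightarrow> 'a" where "label (PNode a cs) = a"
fun children :: "'a ptree \<Rightarrow> 'a ptree list" where "children (PNode a cs) = cs"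

text \<open>Vertices of a planar forest are addressed by paths: \<open>[i0,i1,...,ik]\<close> is the
\<open>ik\<close>-th child of ... of the \<open>i1\<close>-th child of the \<open>i0\<close>-th root (indices counted
from the left, starting at 0).\<close>

fun subtree :: "'a pforest \<Rightarrow> nat list \<Rightarrow> 'a ptree option" where
  "subtree ts [] = None"
| "subtree ts [i] = (if i < length ts then Some (ts ! i) else None)"
| "subtree ts (i # j # p) = (if i < length ts then subtree (children (ts ! i)) (j # p) else None)"

definition verts :: "'a pforest \<Rightarrow> nat list set" where
  "verts f = {p. subtree f p \<noteq> None}"

definition dec :: "'a pforest \<Rightarrow> nat list \<Rightarrow> 'a" where
  "dec f p = label (the (subtree f p))"

definition below :: "nat list \<Rightarrow> nat list \<Rightarrow> bool" where
  "below v w \<longleftrightarrow> (\<exists>r. r \<noteq> [] \<and> w = v @ r)"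

text \<open>Generating relation of \<open>\<ll>\<close>: \<open>v < w\<close>, or \<open>v, w\<close> siblings (children of a common
vertex, or both roots -- the case \<open>p = []\<close>) with \<open>v\<close> to the right of \<open>w\<close>.\<close>

definition llgen :: "'a pforest \<Rightarrow> (nat list \<times> nat list) set" where
  "llgen f = {(v, w). v \<in> verts f \<and> w \<in> verts f \<and>
      (below v w \<or> (\<exists>p i j. v = p @ [i] \<and> w = p @ [j] \<and> j < i))}"

definition ll :: "'a pforest \<Rightarrow> (nat list \<times> nat list) set" where
  "ll f = (llgen f)\<^sup>+"

text \<open>Induced decorated planar forest on a vertex set \<open>W\<close>: vertices outside \<open>W\<close> are
removed, their kept descendants attached to the nearest kept ancestor (or become roots),
left-to-right order preserved.\<close>

fun restr_t :: "nat list \<Rightarrow> nat list set \<Rightarrow> 'a ptree \<Rightarrow> 'a pforest"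
and restr_f :: "nat list \<Rightarrow> nat \<Rightarrow> nat list set \<Rightarrow> 'a pforest \<Rightarrow> 'a pforest" where
  "restr_t p W (PNode a cs) =
     (if p \<in> W then [PNode a (restr_f p 0 W cs)] else restr_f p 0 W cs)"
| "restr_f p k W [] = []"
| "restr_f p k W (t # ts) = restr_t (p @ [k]) W t @ restr_f p (Suc k) W ts"

definition restr :: "'a pforest \<Rightarrow> nat list set \<Rightarrow> 'a pforest" where
  "restr f W = restr_f [] 0 W f"

definition comp_rel :: "'a pforest \<Rightarrow> nat list set \<Rightarrow> (nat list \<times> nat list) set" where
  "comp_rel f V' = {(u, w). u \<in> V' \<and> w \<in> V' \<and> ((u, w) \<in> ll f \<or> (w, u) \<in> ll f)}"

definition comps :: "'a pforest \<Rightarrow> nat list set \<Rightarrow> nat list set set" where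
  "comps f V' = {{w \<in> V'. (v, w) \<in> (comp_rel f V')\<^sup>*} | v. v \<in> V'}"

text \<open>\<open>(\<tau>|_{V'})^{\<sqcup>\<sqcup>}\<close>: shuffle product of the \<open>\<tau>|_C\<close> over the components \<open>C\<close>
(well defined since the shuffle product is commutative and associative).\<close>

definition shuf_comps :: "'a pforest \<Rightarrow> nat list set \<Rightarrow> 'a pforest multiset" where
  "shuf_comps f V' =
     fold_mset (\<lambda>C acc. mshuf {#restr f C#} acc) {#[]#} (mset_set (comps f V'))"

definition downclosed :: "'a pforest \<Rightarrow> nat list set \<Rightarrow> bool" where
  "downclosed f V'' \<longleftrightarrow> V'' \<subseteq> verts f \<and> (\<forall>v\<in>V''. \<forall>w. (w, v) \<in> ll f \<longrightarrow> w \<in> V'')"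

definition mkw_cop :: "'a pforest \<Rightarrow> ('a pforest \<times> 'a pforest) multiset" where
  "mkw_cop f = (\<Sum>V''\<in>{V''. downclosed f V''}.
      image_mset (\<lambda>\<sigma>. (\<sigma>, restr f V'')) (shuf_comps f (verts f - V'')))"

definition nverts :: "'a pforest \<Rightarrow> nat" where
  "nverts f = card (verts f)"

definition arb :: "'a pforest \<Rightarrow> 'a list multiset" where
  "arb f = image_mset (map (dec f))
     (mset_set {vs. distinct vs \<and> set vs = verts f \<and>
        (\<forall>i<length vs. \<forall>j<length vs. (vs ! i, vs ! j) \<in> ll f \<longrightarrow> i > j)})"

end

theory Submission
  imports Defs
begin

text \<open>Arborification is computed through reverse linear extensions of \<open>\<ll>\<close>. In a forest
\<open>ts @ [PNode a cs]\<close> the rightmost root is \<open>\<ll>\<close>-below every other vertex, while the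
vertices of \<open>ts\<close> and of \<open>cs\<close> are mutually incomparable; hence the arborification of the
forest is the shuffle of those of \<open>ts\<close> and \<open>cs\<close>, followed by the letter \<open>a\<close>. Induction
over this decomposition shows that arborification turns the shuffle of forests into the
shuffle of words, which gives multiplicativity. Chen's relation follows by the same
induction: a nonempty downset of \<open>ts @ [PNode a cs]\<close> is glued from downsets of \<open>ts\<close> and
\<open>cs\<close>, the components of its complement split accordingly, and deconcatenation is a
morphism for the shuffle product. The regularity bound is inherited because the
arborification of a forest with \<open>n\<close> vertices consists of words of length \<open>n\<close>.\<close>

section \<open>Shuffle and deconcatenation of words\<close>

lemma shuf_Nil2 [simp]: "shuf xs [] = {#xs#}"
  by (cases xs) auto

lemma shuf_comm: "shuf xs ys = shuf ys xs"
  by (induction xs ys rule: shuf.induct) (auto simp: add.commute)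

lemma image_mset_sum_mset: "image_mset g (sum_mset MM) = sum_mset (image_mset (image_mset g) MM)"
  by (induction MM) auto

lemma sum_mset_singletons [simp]: "(\<Sum>z\<in>#M. {#z#}) = M"
  by (induction M) auto

lemma sum_mset_shuf_Nil [simp]: "(\<Sum>z\<in>#M. shuf [] z) = M"
  by (induction M) auto

lemma shuf_map: "image_mset (map f) (shuf xs ys) = shuf (map f xs) (map f ys)"
proof (induction xs ys rule: shuf.induct)
  case (3 x xs y ys)
  then show ?case
    by (simp add: multiset.map_comp o_def flip: 3 multiset.map_comp[of "Cons _" "map f", unfolded o_def])
qed auto

lemma shuf_assoc: "(\<Sum>z\<in>#shuf x y. shuf z w) = (\<Sum>z\<in>#shuf y w. shuf x z)"
proof (induction "length x + length y + length w" arbitrary: x y w rule: less_induct)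
  case less
  show ?case
  proof (cases "x = [] \<or> y = [] \<or> w = []")
    case True
    then show ?thesis by auto
  next
    case False
    then obtain a x' b y' c w' where xyw: "x = a # x'" "y = b # y'" "w = c # w'"
      by (meson list.exhaust)
    define L where "L x y w = (\<Sum>z\<in>#shuf x y. shuf z w)" for x y w :: "'a list"
    define R where "R x y w = (\<Sum>z\<in>#shuf y w. shuf x z)" for x y w :: "'a list"
    have IH: "L x' y w = R x' y w" "L x y' w = R x y' w" "L x y w' = R x y w'"
      unfolding L_def R_def by (rule less; simp add: xyw)+
    have "L x y w = image_mset (Cons a) (L x' y w) + image_mset (Cons b) (L x y' w)
       + image_mset (Cons c) (L x y w')"
      unfolding L_def xyw
      by (simp add: image_mset_sum_mset sum_mset.distrib multiset.map_comp o_def add_ac)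
    moreover have "R x y w = image_mset (Cons a) (R x' y w) + image_mset (Cons b) (R x y' w)
       + image_mset (Cons c) (R x y w')"
      unfolding R_def xyw
      by (simp add: image_mset_sum_mset sum_mset.distrib multiset.map_comp o_def add_ac)
    ultimately show ?thesis using IH unfolding L_def R_def by simp
  qed
qed

lemma shuf_single_snoc:
  "shuf [x] (ys @ [y]) = {#ys @ [y, x]#} + image_mset (\<lambda>z. z @ [y]) (shuf [x] ys)"
  by (induction ys) (simp_all add: multiset.map_comp o_def)

lemma shuf_snoc:
  "shuf (xs @ [x]) (ys @ [y]) =
     image_mset (\<lambda>z. z @ [x]) (shuf xs (ys @ [y])) + image_mset (\<lambda>z. z @ [y]) (shuf (xs @ [x]) ys)"
proof (induction xs arbitrary: ys)
  case Nil
  then show ?case by (simp add: shuf_single_snoc)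
next
  case (Cons a xs)
  note IH = Cons.IH
  show ?case
  proof (induction ys)
    case Nil
    have "shuf ((a # xs) @ [x]) [y] = {#(a # xs) @ [x, y]#} + image_mset (\<lambda>z. z @ [x]) (shuf [y] (a # xs))"
      by (subst shuf_comm) (rule shuf_single_snoc)
    then show ?case by (simp add: shuf_comm[of "[y]"])
  next
    case (Cons b ys)
    then show ?case
      using IH[of "b # ys"] by (simp add: multiset.map_comp o_def add_ac)
  qed
qed

lemma mshuf_add_left: "mshuf (M1 + M2) N = mshuf M1 N + mshuf M2 N"
  by (simp add: mshuf_def)

lemma mshuf_add_right: "mshuf M (N1 + N2) = mshuf M N1 + mshuf M N2"
  by (simp add: mshuf_def sum_mset.distrib)

lemma mshuf_empty_left [simp]: "mshuf {#} N = {#}"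
  by (simp add: mshuf_def)

lemma mshuf_empty_right [simp]: "mshuf M {#} = {#}"
  by (simp add: mshuf_def)

lemma mshuf_single_single [simp]: "mshuf {#x#} {#y#} = shuf x y"
  by (simp add: mshuf_def)

lemma mshuf_unit_left [simp]: "mshuf {#[]#} M = M"
  by (simp add: mshuf_def)

lemma mshuf_unit_right [simp]: "mshuf M {#[]#} = M"
  by (simp add: mshuf_def)

lemma mshuf_sum_mset_left: "mshuf (\<Sum>i\<in>#I. F i) N = (\<Sum>i\<in>#I. mshuf (F i) N)"
  by (induction I) (auto simp: mshuf_add_left)

lemma mshuf_sum_mset_right: "mshuf M (\<Sum>i\<in>#I. F i) = (\<Sum>i\<in>#I. mshuf M (F i))"
  by (induction I) (auto simp: mshuf_add_right)

lemma mshuf_sum_left: "mshuf (\<Sum>i\<in>I. F i) N = (\<Sum>i\<in>I. mshuf (F i) N)"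
  by (induction I rule: infinite_finite_induct) (auto simp: mshuf_add_left)

lemma mshuf_sum_right: "mshuf M (\<Sum>i\<in>I. F i) = (\<Sum>i\<in>I. mshuf M (F i))"
  by (induction I rule: infinite_finite_induct) (auto simp: mshuf_add_right)

lemma mshuf_comm: "mshuf M N = mshuf N M"
  unfolding mshuf_def by (subst sum_mset.swap) (simp add: shuf_comm)

lemma mshuf_assoc: "mshuf (mshuf A B) C = mshuf A (mshuf B C)"
proof -
  have "mshuf (mshuf A B) C = (\<Sum>x\<in>#A. \<Sum>y\<in>#B. mshuf (shuf x y) C)"
    by (simp add: mshuf_def[of A B] mshuf_sum_mset_left)
  also have "\<dots> = (\<Sum>x\<in>#A. \<Sum>y\<in>#B. \<Sum>c\<in>#C. \<Sum>z\<in>#shuf x y. shuf z c)"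
    by (simp add: mshuf_def, subst sum_mset.swap, simp)
  also have "\<dots> = (\<Sum>x\<in>#A. \<Sum>y\<in>#B. \<Sum>c\<in>#C. \<Sum>z\<in>#shuf y c. shuf x z)"
    by (simp add: shuf_assoc)
  also have "\<dots> = mshuf A (mshuf B C)"
  proof -
    have "mshuf A (mshuf B C) = (\<Sum>x\<in>#A. mshuf {#x#} (\<Sum>y\<in>#B. \<Sum>c\<in>#C. shuf y c))"
      by (simp add: mshuf_def)
    also have "\<dots> = (\<Sum>x\<in>#A. \<Sum>y\<in>#B. \<Sum>c\<in>#C. mshuf {#x#} (shuf y c))"
      by (simp add: mshuf_sum_mset_right)
    finally show ?thesis by (simp add: mshuf_def)
  qed
  finally show ?thesis .
qed

lemma mshuf_right_commute: "mshuf (mshuf A B) C = mshuf (mshuf A C) B"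
  by (simp add: mshuf_assoc mshuf_comm[of B C])

lemma mshuf_Cons: "mshuf (image_mset (Cons x) M) (image_mset (Cons y) N) =
   image_mset (Cons x) (mshuf M (image_mset (Cons y) N)) + image_mset (Cons y) (mshuf (image_mset (Cons x) M) N)"
  by (simp add: mshuf_def image_mset_sum_mset sum_mset.distrib multiset.map_comp o_def)

lemma mshuf_snoc: "mshuf (image_mset (\<lambda>z. z @ [x]) M) (image_mset (\<lambda>z. z @ [y]) N) =
   image_mset (\<lambda>z. z @ [x]) (mshuf M (image_mset (\<lambda>z. z @ [y]) N))
   + image_mset (\<lambda>z. z @ [y]) (mshuf (image_mset (\<lambda>z. z @ [x]) M) N)"
  by (simp add: mshuf_def image_mset_sum_mset sum_mset.distrib multiset.map_comp o_def shuf_snoc)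

lemma mshuf_map: "image_mset (map d) (mshuf M N) = mshuf (image_mset (map d) M) (image_mset (map d) N)"
  by (simp add: mshuf_def image_mset_sum_mset multiset.map_comp o_def shuf_map)

lemma lin_single [simp]: "lin X {#w#} = X w"
  by (simp add: lin_def)

lemma lin_sum_mset: "lin X (\<Sum>i\<in>#I. F i) = (\<Sum>i\<in>#I. lin X (F i))"
  by (induction I) (auto simp: lin_def)

lemma sum_mset_product:
  "(\<Sum>x\<in>#M. \<Sum>y\<in>#N. f x * g y) = (\<Sum>x\<in>#M. f x) * (\<Sum>y\<in>#N. (g y :: 'c::comm_semiring_0))"
  by (induction M) (auto simp: sum_mset_distrib_left algebra_simps)

lemma lin_mshuf:
  assumes "\<And>\<sigma> \<tau>. lin X (shuf \<sigma> \<tau>) = X \<sigma> * X \<tau>"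
  shows "lin X (mshuf M N) = lin X M * lin X N"
proof -
  have "lin X (mshuf M N) = (\<Sum>x\<in>#M. \<Sum>y\<in>#N. X x * X y)"
    by (simp add: mshuf_def lin_sum_mset assms)
  also have "\<dots> = lin X M * lin X N"
    unfolding lin_def by (rule sum_mset_product)
  finally show ?thesis .
qed

lemma deconc_Nil [simp]: "deconc [] = {#([], [])#}"
  by (simp add: deconc_def)

lemma deconc_Cons: "deconc (x # w) = add_mset ([], x # w) (image_mset (\<lambda>p. (x # fst p, snd p)) (deconc w))"
proof -
  have H: "[0..<Suc (length (x # w))] = 0 # map Suc [0..<Suc (length w)]"
    by (simp add: upt_conv_Cons map_Suc_upt del: upt_Suc)
  have L: "map (\<lambda>k. (take k (x # w), drop k (x # w))) [0..<Suc (length (x # w))] = ([], x # w) # map (\<lambda>p. (x # fst p, snd p)) (map (\<lambda>k. (take k w, drop k w)) [0..<Suc (length w)])"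
    unfolding H by simp
  show ?thesis unfolding deconc_def L by (simp only: mset.simps mset_map)
qed

lemma deconc_snoc: "deconc (w @ [a]) = add_mset (w @ [a], []) (image_mset (\<lambda>p. (fst p, snd p @ [a])) (deconc w))"
proof -
  have H: "[0..<Suc (length (w @ [a]))] = [0..<Suc (length w)] @ [Suc (length w)]"
    by simp
  have L: "map (\<lambda>k. (take k (w @ [a]), drop k (w @ [a]))) [0..<Suc (length (w @ [a]))]
     = map (\<lambda>p. (fst p, snd p @ [a])) (map (\<lambda>k. (take k w, drop k w)) [0..<Suc (length w)]) @ [(w @ [a],[])]"
    unfolding H by auto
  show ?thesis unfolding deconc_def L by (simp only: mset_append mset_map mset.simps) simp
qed

lemma sum_deconc_Cons: "(\<Sum>p\<in>#deconc (x # z). F (fst p) (snd p)) = F [] (x # z) + (\<Sum>p\<in>#deconc z. F (x # fst p) (snd p))"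
  by (simp add: deconc_Cons multiset.map_comp o_def)

text \<open>Deconcatenation is a morphism for the shuffle product, written with an arbitrary
bilinear \<open>F\<close> in place of the tensor product.\<close>

lemma deconc_shuf:
  fixes F :: "'b list \<Rightarrow> 'b list \<Rightarrow> 'c::comm_monoid_add"
  shows "(\<Sum>z\<in>#shuf u v. \<Sum>p\<in>#deconc z. F (fst p) (snd p)) =
    (\<Sum>p1\<in>#deconc u. \<Sum>p2\<in>#deconc v. \<Sum>z1\<in>#shuf (fst p1) (fst p2). \<Sum>z2\<in>#shuf (snd p1) (snd p2). F z1 z2)"
proof (induction u v arbitrary: F rule: shuf.induct)
  case (1 ys)
  then show ?case by simp
next
  case (2 x xs)
  then show ?case by simp
next
  case (3 x xs y ys)
  define G where "G p1 p2 = (\<Sum>z1\<in>#shuf (fst p1) (fst p2). \<Sum>z2\<in>#shuf (snd p1) (snd p2). F z1 z2)" for p1 p2 :: "'b list \<times> 'b list"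
  have IH1: "(\<Sum>z\<in>#shuf xs (y # ys). \<Sum>p\<in>#deconc z. F (x # fst p) (snd p)) =
    (\<Sum>p1\<in>#deconc xs. \<Sum>p2\<in>#deconc (y # ys). \<Sum>z1\<in>#shuf (fst p1) (fst p2). \<Sum>z2\<in>#shuf (snd p1) (snd p2). F (x # z1) z2)"
    by (rule "3.IH"(1))
  have IH2: "(\<Sum>z\<in>#shuf (x # xs) ys. \<Sum>p\<in>#deconc z. F (y # fst p) (snd p)) =
    (\<Sum>p1\<in>#deconc (x # xs). \<Sum>p2\<in>#deconc ys. \<Sum>z1\<in>#shuf (fst p1) (fst p2). \<Sum>z2\<in>#shuf (snd p1) (snd p2). F (y # z1) z2)"
    by (rule "3.IH"(2))
  have LHS: "(\<Sum>z\<in>#shuf (x # xs) (y # ys). \<Sum>p\<in>#deconc z. F (fst p) (snd p)) =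
     (\<Sum>z\<in>#shuf (x # xs) (y # ys). F [] z) +
     (\<Sum>z\<in>#shuf xs (y # ys). \<Sum>p\<in>#deconc z. F (x # fst p) (snd p)) +
     (\<Sum>z\<in>#shuf (x # xs) ys. \<Sum>p\<in>#deconc z. F (y # fst p) (snd p))"
    by (simp add: sum_deconc_Cons sum_mset.distrib add_ac multiset.map_comp o_def)
  have R1: "(\<Sum>p1\<in>#deconc xs. \<Sum>p2\<in>#deconc (y # ys). \<Sum>z1\<in>#shuf (fst p1) (fst p2). \<Sum>z2\<in>#shuf (snd p1) (snd p2). F (x # z1) z2)
     = (\<Sum>p1\<in>#deconc xs. G (x # fst p1, snd p1) ([], y # ys)) +
       (\<Sum>p1\<in>#deconc xs. \<Sum>p2\<in>#deconc ys. \<Sum>z1\<in>#shuf (fst p1) (y # fst p2). \<Sum>z2\<in>#shuf (snd p1) (snd p2). F (x # z1) z2)"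
    by (simp add: G_def deconc_Cons sum_mset.distrib multiset.map_comp o_def)
  have R2: "(\<Sum>p1\<in>#deconc (x # xs). \<Sum>p2\<in>#deconc ys. \<Sum>z1\<in>#shuf (fst p1) (fst p2). \<Sum>z2\<in>#shuf (snd p1) (snd p2). F (y # z1) z2)
     = (\<Sum>p2\<in>#deconc ys. G ([], x # xs) (y # fst p2, snd p2)) +
       (\<Sum>p1\<in>#deconc xs. \<Sum>p2\<in>#deconc ys. \<Sum>z1\<in>#shuf (x # fst p1) (fst p2). \<Sum>z2\<in>#shuf (snd p1) (snd p2). F (y # z1) z2)"
    by (simp add: G_def deconc_Cons sum_mset.distrib multiset.map_comp o_def)
  have RHS: "(\<Sum>p1\<in>#deconc (x # xs). \<Sum>p2\<in>#deconc (y # ys). G p1 p2) =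
     G ([], x # xs) ([], y # ys) + (\<Sum>p2\<in>#deconc ys. G ([], x # xs) (y # fst p2, snd p2))
     + (\<Sum>p1\<in>#deconc xs. G (x # fst p1, snd p1) ([], y # ys))
     + (\<Sum>p1\<in>#deconc xs. \<Sum>p2\<in>#deconc ys. G (x # fst p1, snd p1) (y # fst p2, snd p2))"
    by (simp add: deconc_Cons sum_mset.distrib add_ac multiset.map_comp o_def)
  have G4: "G (x # a, b) (y # c, d) = (\<Sum>z1\<in>#shuf a (y # c). \<Sum>z2\<in>#shuf b d. F (x # z1) z2)
      + (\<Sum>z1\<in>#shuf (x # a) c. \<Sum>z2\<in>#shuf b d. F (y # z1) z2)" for a b c d
    by (simp add: G_def multiset.map_comp o_def)
  have G1: "G ([], x # xs) ([], y # ys) = (\<Sum>z\<in>#shuf (x # xs) (y # ys). F [] z)"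
    by (simp add: G_def)
  show ?case
    unfolding LHS IH1 IH2 R1 R2 G_def[symmetric] RHS G4 G1 sum_mset.distrib
    by (simp add: add_ac)
qed

section \<open>Reverse linear extensions\<close>

text \<open>Enumerations of \<open>V\<close> listing \<open>w\<close> before \<open>v\<close> whenever \<open>(v, w) \<in> R\<close>; this is the
order convention of the planar arborification.\<close>

definition rev_linexts :: "'v set \<Rightarrow> ('v \<times> 'v) set \<Rightarrow> 'v list set" where
  "rev_linexts V R =
     {vs. distinct vs \<and> set vs = V \<and> (\<forall>v\<in>V. (v, v) \<notin> R) \<and> sorted_wrt (\<lambda>v w. (v, w) \<notin> R) vs}"

definition maximal_in :: "'v set \<Rightarrow> ('v \<times> 'v) set \<Rightarrow> 'v set" where
  "maximal_in V R = {z \<in> V. \<forall>y\<in>V. (z, y) \<notin> R}"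

lemma rev_linexts_nth_conv:
  "{vs. distinct vs \<and> set vs = V \<and>
      (\<forall>i<length vs. \<forall>j<length vs. (vs ! i, vs ! j) \<in> R \<longrightarrow> i > j)} = rev_linexts V R"
proof -
  have "(\<forall>i<length vs. \<forall>j<length vs. (vs ! i, vs ! j) \<in> R \<longrightarrow> i > j) \<longleftrightarrow>
      (\<forall>v\<in>set vs. (v, v) \<notin> R) \<and> sorted_wrt (\<lambda>v w. (v, w) \<notin> R) vs" for vs
  proof -
    have "(\<forall>i<length vs. \<forall>j<length vs. (vs ! i, vs ! j) \<in> R \<longrightarrow> i > j) \<longleftrightarrow>
        (\<forall>i<length vs. (vs ! i, vs ! i) \<notin> R) \<and>
        (\<forall>i j. i < j \<longrightarrow> j < length vs \<longrightarrow> (vs ! i, vs ! j) \<notin> R)"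
      by (auto dest: order.strict_trans) (metis linorder_neqE_nat)
    then show ?thesis
      unfolding sorted_wrt_iff_nth_less by (simp add: all_set_conv_all_nth)
  qed
  then show ?thesis
    unfolding rev_linexts_def by auto
qed

lemma finite_rev_linexts: "finite V \<Longrightarrow> finite (rev_linexts V R)"
proof -
  assume "finite V"
  have "rev_linexts V R \<subseteq> {xs. set xs \<subseteq> V \<and> length xs \<le> card V}"
    by (auto simp: rev_linexts_def distinct_card[symmetric])
  then show ?thesis
    using finite_lists_length_le[OF \<open>finite V\<close>] finite_subset by blast
qed

lemma rev_linexts_empty [simp]: "rev_linexts {} R = {[]}"
  by (auto simp: rev_linexts_def)

lemma sorted_wrt_cong:
  "(\<And>x y. x \<in> set xs \<Longrightarrow> y \<in> set xs \<Longrightarrow> P x y \<longleftrightarrow> Q x y) \<Longrightarrow> sorted_wrt P xs = sorted_wrt Q xs"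
  by (metis sorted_wrt_mono_rel)

lemma rev_linexts_cong:
  assumes "\<And>x y. x \<in> V \<Longrightarrow> y \<in> V \<Longrightarrow> (x, y) \<in> R \<longleftrightarrow> (x, y) \<in> R'"
  shows "rev_linexts V R = rev_linexts V R'"
proof -
  have "sorted_wrt (\<lambda>v w. (v, w) \<notin> R) vs = sorted_wrt (\<lambda>v w. (v, w) \<notin> R') vs" if "set vs = V" for vs
    using assms that by (intro sorted_wrt_cong) auto
  moreover have "(\<forall>v\<in>V. (v, v) \<notin> R) \<longleftrightarrow> (\<forall>v\<in>V. (v, v) \<notin> R')"
    using assms by blast
  ultimately show ?thesis
    unfolding rev_linexts_def by (intro Collect_cong) blast
qed

lemma rev_linexts_map:
  assumes inj: "inj_on f V"
    and rel: "\<And>x y. x \<in> V \<Longrightarrow> y \<in> V \<Longrightarrow> (f x, f y) \<in> R' \<longleftrightarrow> (x, y) \<in> R"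
  shows "rev_linexts (f ` V) R' = map f ` rev_linexts V R"
proof -
  have map_iff: "map f vs \<in> rev_linexts (f ` V) R' \<longleftrightarrow> vs \<in> rev_linexts V R" if "set vs = V" for vs
  proof -
    have "sorted_wrt (\<lambda>x y. (f x, f y) \<notin> R') vs = sorted_wrt (\<lambda>x y. (x, y) \<notin> R) vs"
      using rel that by (intro sorted_wrt_cong) auto
    then show ?thesis
      using inj rel that by (auto simp: rev_linexts_def distinct_map sorted_wrt_map)
  qed
  show ?thesis
  proof
    show "map f ` rev_linexts V R \<subseteq> rev_linexts (f ` V) R'"
      using map_iff by (auto simp: rev_linexts_def)
  next
    show "rev_linexts (f ` V) R' \<subseteq> map f ` rev_linexts V R"
    proof
      fix ws assume ws: "ws \<in> rev_linexts (f ` V) R'"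
      define vs where "vs = map (the_inv_into V f) ws"
      have "map f vs = ws"
        unfolding vs_def map_map
        by (rule map_idI) (use ws inj in \<open>auto simp: rev_linexts_def f_the_inv_into_f\<close>)
      moreover have "set vs = V"
        using ws inj by (auto simp: vs_def rev_linexts_def the_inv_into_f_f)
      ultimately show "ws \<in> map f ` rev_linexts V R"
        using ws map_iff by blast
    qed
  qed
qed

lemma rev_linexts_Cons:
  assumes "V \<noteq> {}"
  shows "rev_linexts V R = (\<Union>z\<in>maximal_in V R. Cons z ` rev_linexts (V - {z}) R)"
proof
  show "rev_linexts V R \<subseteq> (\<Union>z\<in>maximal_in V R. Cons z ` rev_linexts (V - {z}) R)"
  proof
    fix vs assume vs: "vs \<in> rev_linexts V R"
    then obtain z w where "vs = z # w"
      using assms by (cases vs) (auto simp: rev_linexts_def)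
    then show "vs \<in> (\<Union>z\<in>maximal_in V R. Cons z ` rev_linexts (V - {z}) R)"
      using vs by (auto simp: rev_linexts_def maximal_in_def)
  qed
next
  show "(\<Union>z\<in>maximal_in V R. Cons z ` rev_linexts (V - {z}) R) \<subseteq> rev_linexts V R"
    by (auto simp: rev_linexts_def maximal_in_def)
qed

lemma mset_set_UN:
  assumes "finite I" "\<And>i. i \<in> I \<Longrightarrow> finite (A i)"
    and "\<And>i j. i \<in> I \<Longrightarrow> j \<in> I \<Longrightarrow> i \<noteq> j \<Longrightarrow> A i \<inter> A j = {}"
  shows "mset_set (\<Union>i\<in>I. A i) = (\<Sum>i\<in>I. mset_set (A i))"
  using assms
proof (induction I rule: finite_induct)
  case (insert x F)
  then have "mset_set (A x \<union> (\<Union>i\<in>F. A i)) = mset_set (A x) + mset_set (\<Union>i\<in>F. A i)"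
    by (intro mset_set_Union) auto
  then show ?case
    using insert by simp
qed simp

lemma mset_rev_linexts_Cons:
  assumes "finite V" "V \<noteq> {}"
  shows "mset_set (rev_linexts V R) =
    (\<Sum>z\<in>maximal_in V R. image_mset (Cons z) (mset_set (rev_linexts (V - {z}) R)))"
proof -
  have "mset_set (rev_linexts V R) = (\<Sum>z\<in>maximal_in V R. mset_set (Cons z ` rev_linexts (V - {z}) R))"
    unfolding rev_linexts_Cons[OF assms(2)]
    by (rule mset_set_UN) (auto simp: maximal_in_def assms finite_rev_linexts)
  then show ?thesis
    by (simp add: image_mset_mset_set)
qed

lemma rev_linexts_snoc:
  assumes "m \<in> V" "(m, m) \<notin> R" "\<And>x. x \<in> V \<Longrightarrow> x \<noteq> m \<Longrightarrow> (m, x) \<in> R \<and> (x, m) \<notin> R"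
  shows "rev_linexts V R = (\<lambda>w. w @ [m]) ` rev_linexts (V - {m}) R"
proof
  show "(\<lambda>w. w @ [m]) ` rev_linexts (V - {m}) R \<subseteq> rev_linexts V R"
  proof clarify
    fix w assume "w \<in> rev_linexts (V - {m}) R"
    then have "distinct w" "set w = V - {m}" "\<forall>v\<in>V - {m}. (v, v) \<notin> R"
      "sorted_wrt (\<lambda>v w. (v, w) \<notin> R) w"
      by (simp_all add: rev_linexts_def)
    then show "w @ [m] \<in> rev_linexts V R"
      using assms by (auto simp: rev_linexts_def sorted_wrt_append)
  qed
next
  show "rev_linexts V R \<subseteq> (\<lambda>w. w @ [m]) ` rev_linexts (V - {m}) R"
  proof
    fix vs assume vs: "vs \<in> rev_linexts V R"
    then have "vs \<noteq> []"
      using assms(1) by (auto simp: rev_linexts_def)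
    then obtain w x where wx: "vs = w @ [x]"
      by (metis rev_exhaust)
    have w: "distinct (w @ [x])" "set w \<union> {x} = V" "\<forall>v\<in>V. (v, v) \<notin> R"
      "sorted_wrt (\<lambda>v w. (v, w) \<notin> R) w" "\<forall>v\<in>set w. (v, x) \<notin> R"
      using vs unfolding wx by (auto simp: rev_linexts_def sorted_wrt_append)
    have "x = m"
    proof (rule ccontr)
      assume "x \<noteq> m"
      then have "m \<in> set w" "x \<in> V"
        using w(2) assms(1) by auto
      then show False
        using w(5) assms(3)[of x] \<open>x \<noteq> m\<close> by blast
    qed
    then have "w \<in> rev_linexts (V - {m}) R"
      using w unfolding rev_linexts_def by auto
    then show "vs \<in> (\<lambda>w. w @ [m]) ` rev_linexts (V - {m}) R"
      using wx \<open>x = m\<close> by blast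
  qed
qed

lemma image_mset_sum: "image_mset f (\<Sum>i\<in>I. M i) = (\<Sum>i\<in>I. image_mset f (M i))"
  by (induction I rule: infinite_finite_induct) auto

lemma mshuf_sum_Cons:
  "mshuf (\<Sum>x\<in>A. image_mset (Cons x) (M x)) (\<Sum>y\<in>B. image_mset (Cons y) (N y)) =
     (\<Sum>x\<in>A. image_mset (Cons x) (mshuf (M x) (\<Sum>y\<in>B. image_mset (Cons y) (N y))))
   + (\<Sum>y\<in>B. image_mset (Cons y) (mshuf (\<Sum>x\<in>A. image_mset (Cons x) (M x)) (N y)))"
proof -
  have "mshuf (\<Sum>x\<in>A. image_mset (Cons x) (M x)) (\<Sum>y\<in>B. image_mset (Cons y) (N y)) =
      (\<Sum>x\<in>A. \<Sum>y\<in>B. mshuf (image_mset (Cons x) (M x)) (image_mset (Cons y) (N y)))"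
    by (simp add: mshuf_sum_left mshuf_sum_right, subst sum.swap) simp
  also have "\<dots> = (\<Sum>x\<in>A. \<Sum>y\<in>B. image_mset (Cons x) (mshuf (M x) (image_mset (Cons y) (N y))))
      + (\<Sum>y\<in>B. \<Sum>x\<in>A. image_mset (Cons y) (mshuf (image_mset (Cons x) (M x)) (N y)))"
    by (simp add: mshuf_Cons sum.distrib sum.swap[of _ B])
  finally show ?thesis
    by (simp add: mshuf_sum_left mshuf_sum_right image_mset_sum)
qed

lemma mset_rev_linexts_Un:
  assumes "finite A" "finite B" "A \<inter> B = {}"
    and "\<And>a b. a \<in> A \<Longrightarrow> b \<in> B \<Longrightarrow> (a, b) \<notin> R \<and> (b, a) \<notin> R"
  shows "mset_set (rev_linexts (A \<union> B) R) = mshuf (mset_set (rev_linexts A R)) (mset_set (rev_linexts B R))"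
  using assms
proof (induction "card A + card B" arbitrary: A B rule: less_induct)
  case less
  define E where "E S = mset_set (rev_linexts S R)" for S
  show ?case
  proof (cases "A = {} \<or> B = {}")
    case True
    then show ?thesis by auto
  next
    case False
    have max_Un: "maximal_in (A \<union> B) R = maximal_in A R \<union> maximal_in B R"
      using less.prems(4) by (auto simp: maximal_in_def)
    have max_sub: "maximal_in A R \<subseteq> A" "maximal_in B R \<subseteq> B"
      by (auto simp: maximal_in_def)
    then have fin: "finite (maximal_in A R)" "finite (maximal_in B R)"
      using less.prems(1, 2) finite_subset by blast+
    have disj: "maximal_in A R \<inter> maximal_in B R = {}"
      using max_sub less.prems(3) by blast
    have IH_A: "E (A \<union> B - {z}) = mshuf (E (A - {z})) (E B)" if "z \<in> maximal_in A R" for z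
    proof -
      have "z \<in> A" using that max_sub by blast
      then have "A \<union> B - {z} = (A - {z}) \<union> B" "card (A - {z}) + card B < card A + card B"
        using less.prems(1, 3) card_Diff1_less[of A z] by auto
      then show ?thesis
        unfolding E_def using less.hyps[of "A - {z}" B] less.prems by auto
    qed
    have IH_B: "E (A \<union> B - {z}) = mshuf (E A) (E (B - {z}))" if "z \<in> maximal_in B R" for z
    proof -
      have "z \<in> B" using that max_sub by blast
      then have "A \<union> B - {z} = A \<union> (B - {z})" "card A + card (B - {z}) < card A + card B"
        using less.prems(2, 3) card_Diff1_less[of B z] by auto
      then show ?thesis
        unfolding E_def using less.hyps[of A "B - {z}"] less.prems by auto
    qed
    have "E (A \<union> B) = (\<Sum>z\<in>maximal_in A R \<union> maximal_in B R. image_mset (Cons z) (E (A \<union> B - {z})))"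
      unfolding E_def max_Un[symmetric] using less.prems False by (intro mset_rev_linexts_Cons) auto
    also have "\<dots> = (\<Sum>x\<in>maximal_in A R. image_mset (Cons x) (mshuf (E (A - {x})) (E B)))
        + (\<Sum>y\<in>maximal_in B R. image_mset (Cons y) (mshuf (E A) (E (B - {y}))))"
      using IH_A IH_B by (simp add: sum.union_disjoint[OF fin disj])
    also have "\<dots> = mshuf (E A) (E B)"
      using mshuf_sum_Cons[of "\<lambda>x. E (A - {x})" "maximal_in A R" "\<lambda>y. E (B - {y})" "maximal_in B R"]
        mset_rev_linexts_Cons[of A R] mset_rev_linexts_Cons[of B R] less.prems False
      by (simp add: E_def)
    finally show ?thesis unfolding E_def .
  qed
qed

lemma subtree_append:
  "p \<noteq> [] \<Longrightarrow> subtree ts (p @ q) = (case subtree ts p of None \<Rightarrow> None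
     | Some t \<Rightarrow> (if q = [] then Some t else subtree (children t) q))"
proof (induction p arbitrary: ts)
  case Nil then show ?case by simp
next
  case (Cons i p)
  show ?case
  proof (cases p)
    case Nil
    then show ?thesis by (cases q) auto
  next
    case (Cons j p')
    then show ?thesis using Cons.IH by auto
  qed
qed

lemma verts_ne_Nil: "p \<in> verts f \<Longrightarrow> p \<noteq> []"
  by (auto simp: verts_def)

lemma verts_prefix_closed: "p \<noteq> [] \<Longrightarrow> p @ q \<in> verts f \<Longrightarrow> p \<in> verts f"
  by (auto simp: verts_def subtree_append split: option.splits)

section \<open>The order \<open>\<ll>\<close> on vertex addresses\<close>

definition ll_addr :: "nat list \<Rightarrow> nat list \<Rightarrow> bool" where
  "ll_addr v w \<longleftrightarrow> below v w \<or> (\<exists>p i j r. v = p @ [i] \<and> w = p @ [j] @ r \<and> j < i)"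

lemma ll_addr_trans: assumes "ll_addr u v" "ll_addr v w" shows "ll_addr u w"
proof -
  from assms(1) show ?thesis
  proof (unfold ll_addr_def below_def, elim disjE exE conjE)
    fix r1 assume r1: "r1 \<noteq> []" "v = u @ r1"
    from assms(2) show "(\<exists>r. r \<noteq> [] \<and> w = u @ r) \<or> (\<exists>p i j r. u = p @ [i] \<and> w = p @ [j] @ r \<and> j < i)"
    proof (unfold ll_addr_def below_def, elim disjE exE conjE)
      fix r2 assume "r2 \<noteq> []" "w = v @ r2"
      then show ?thesis using r1 by auto
    next
      fix p i j r assume H: "v = p @ [i]" "w = p @ [j] @ r" "j < i"
      obtain r1' x where rx: "r1 = r1' @ [x]" using r1(1) by (metis rev_exhaust)
      then have "(u @ r1') @ [x] = p @ [i]" using r1 H by simp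
      then have "p = u @ r1'" "x = i" by (simp_all only: append1_eq_conv)
      then show ?thesis using H rx by auto
    qed
  next
    fix p i j r assume H1: "u = p @ [i]" "v = p @ [j] @ r" "j < i"
    from assms(2) show "(\<exists>r. r \<noteq> [] \<and> w = u @ r) \<or> (\<exists>p i j r. u = p @ [i] \<and> w = p @ [j] @ r \<and> j < i)"
    proof (unfold ll_addr_def below_def, elim disjE exE conjE)
      fix r2 assume "r2 \<noteq> []" "w = v @ r2"
      then show ?thesis using H1 by auto
    next
      fix p' i' j' r' assume H2: "v = p' @ [i'] " "w = p' @ [j'] @ r'" "j' < i'"
      show ?thesis
      proof (cases "r = []")
        case True
        then have "p = p'" "j = i'" using H1 H2 by auto
        then show ?thesis using H1 H2 by auto
      next
        case False
        obtain r0 x where rx: "r = r0 @ [x]" using False by (metis rev_exhaust)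
        then have "(p @ [j] @ r0) @ [x] = p' @ [i']" using H1 H2 by simp
        then have "p' = p @ [j] @ r0" "x = i'" by (simp_all only: append1_eq_conv)
        then show ?thesis using H1 H2 rx by auto
      qed
    qed
  qed
qed

lemma ll_char: "ll f = {(v, w). v \<in> verts f \<and> w \<in> verts f \<and> ll_addr v w}"
proof
  let ?S = "{(v, w). v \<in> verts f \<and> w \<in> verts f \<and> ll_addr v w}"
  have G: "(v, w) \<in> llgen f \<Longrightarrow> (v, w) \<in> ?S" for v w
  proof -
    assume "(v, w) \<in> llgen f"
    then have A: "v \<in> verts f" "w \<in> verts f" "below v w \<or> (\<exists>p i j. v = p @ [i] \<and> w = p @ [j] \<and> j < i)"
      unfolding llgen_def by auto
    have "ll_addr v w" using A(3) unfolding ll_addr_def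
    proof (elim disjE exE conjE)
      fix p i j assume "v = p @ [i]" "w = p @ [j]" "j < i"
      then show "below v w \<or> (\<exists>p i j r. v = p @ [i] \<and> w = p @ [j] @ r \<and> j < i)"
        by (intro disjI2 exI[of _ p] exI[of _ i] exI[of _ j] exI[of _ "[]"]) simp
    qed simp
    then show ?thesis using A by simp
  qed
  have "(v, w) \<in> (llgen f)\<^sup>+ \<Longrightarrow> (v, w) \<in> ?S" for v w
  proof (induction rule: trancl_induct)
    case (base y) then show ?case using G by blast
  next
    case (step y z) then show ?case using G ll_addr_trans by blast
  qed
  then show "ll f \<subseteq> ?S" unfolding ll_def by auto
next
  show "{(v, w). v \<in> verts f \<and> w \<in> verts f \<and> ll_addr v w} \<subseteq> ll f"
  proof (clarify)
    fix v w assume H: "v \<in> verts f" "w \<in> verts f" "ll_addr v w"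
    show "(v, w) \<in> ll f"
    proof (cases "below v w")
      case True
      then show ?thesis using H unfolding ll_def llgen_def by auto
    next
      case False
      then obtain p i j r where P: "v = p @ [i]" "w = p @ [j] @ r" "j < i" using H(3) by (auto simp: ll_addr_def)
      have pj: "p @ [j] \<in> verts f" using H(2) P verts_prefix_closed[of "p @ [j]" r f] by auto
      have 1: "(v, p @ [j]) \<in> llgen f" using H pj P unfolding llgen_def by blast
      show ?thesis
      proof (cases "r = []")
        case True then show ?thesis using 1 P unfolding ll_def by auto
      next
        case False
        then have "(p @ [j], w) \<in> llgen f" using H pj P unfolding llgen_def below_def by auto
        then show ?thesis using 1 unfolding ll_def by auto
      qed
    qed
  qed
qed

lemma subtree_snoc: "subtree (ts @ [T]) (i # q) = (if i < length ts then subtree ts (i # q)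
   else if i = length ts then (if q = [] then Some T else subtree (children T) q) else None)"
  by (cases q) (auto simp: nth_append)

lemma subtree_hd_less: assumes "subtree ts (i # q) \<noteq> None" shows "i < length ts"
proof (cases q)
  case Nil then show ?thesis using assms by (auto split: if_splits)
next
  case (Cons j q') then show ?thesis using assms by (auto split: if_splits)
qed

lemma verts_hd_less: "i # q \<in> verts ts \<Longrightarrow> i < length ts"
  using subtree_hd_less unfolding verts_def by blast

lemma verts_ConsE:
  assumes "v \<in> verts ts"
  obtains i r where "v = i # r" "i < length ts"
  using assms verts_ne_Nil verts_hd_less by (metis list.exhaust)

lemma verts_snoc: "verts (ts @ [PNode a cs]) = verts ts \<union> {[length ts]} \<union> Cons (length ts) ` verts cs"
proof -
  have "p \<in> verts (ts @ [PNode a cs]) \<longleftrightarrow> p \<in> verts ts \<union> {[length ts]} \<union> Cons (length ts) ` verts cs" for p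
  proof (cases p)
    case Nil then show ?thesis by (auto simp: verts_def)
  next
    case (Cons i q)
    have e: "p \<in> verts (ts @ [PNode a cs]) \<longleftrightarrow> subtree (ts @ [PNode a cs]) (i # q) \<noteq> None"
      by (simp add: verts_def Cons)
    consider "i < length ts" | "i = length ts" | "i > length ts" by linarith
    then show ?thesis
    proof cases
      case 1
      then show ?thesis unfolding e subtree_snoc using Cons
        by (auto simp: verts_def)
    next
      case 2
      show ?thesis
      proof (cases "q = []")
        case True then show ?thesis unfolding e subtree_snoc using Cons 2 by simp
      next
        case False
        then have "p \<notin> verts ts" using Cons 2 verts_hd_less by blast
        then show ?thesis unfolding e subtree_snoc using Cons 2 False by (auto simp: verts_def)
      qed
    next
      case 3
      then have "p \<notin> verts ts" using Cons verts_hd_less by fastforce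
      then show ?thesis unfolding e subtree_snoc using Cons 3 by auto
    qed
  qed
  then show ?thesis by blast
qed

lemma verts_Nil [simp]: "verts ([]::'a pforest) = {}"
proof -
  have "subtree ([]::'a pforest) p = None" for p :: "nat list"
  proof (cases p)
    case (Cons i q) then show ?thesis using subtree_hd_less[of "[]" i q] by (metis less_nat_zero_code list.size(3))
  qed simp
  then show ?thesis by (simp add: verts_def)
qed

lemma forest_snoc_induct [case_names Nil snoc]:
  assumes "P []" "\<And>ts a cs. P ts \<Longrightarrow> P cs \<Longrightarrow> P (ts @ [PNode a cs])"
  shows "P f"
proof (induction "size_list size f" arbitrary: f rule: less_induct)
  case less
  show ?case
  proof (cases f rule: rev_cases)
    case Nil then show ?thesis using assms by simp
  next
    case (snoc ts t)
    obtain a cs where t: "t = PNode a cs" by (cases t)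
    have "size_list size ts < size_list size f" "size_list size cs < size_list size f"
      using snoc t by auto
    then show ?thesis using less assms(2) snoc t by auto
  qed
qed

lemma finite_verts: "finite (verts f)"
  by (induction f rule: forest_snoc_induct) (auto simp: verts_snoc)

lemma dec_snoc_left: "p \<in> verts ts \<Longrightarrow> dec (ts @ [T]) p = dec ts p"
  by (erule verts_ConsE) (simp add: dec_def subtree_snoc)

lemma dec_snoc_root: "dec (ts @ [PNode a cs]) [length ts] = a"
  by (simp add: dec_def subtree_snoc)

lemma dec_snoc_child: "q \<in> verts cs \<Longrightarrow> dec (ts @ [PNode a cs]) (length ts # q) = dec cs q"
  using verts_ne_Nil[of q cs] by (simp add: dec_def subtree_snoc)

lemma ll_addr_left_last: "v \<in> verts ts \<Longrightarrow> \<not> ll_addr v (length ts # q)"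
  by (erule verts_ConsE) (auto simp: ll_addr_def below_def Cons_eq_append_conv)

lemma ll_addr_last_left: "v \<in> verts ts \<Longrightarrow> q \<in> verts cs \<Longrightarrow> \<not> ll_addr (length ts # q) v"
  by (erule verts_ConsE) (auto simp: ll_addr_def below_def Cons_eq_append_conv dest: verts_ne_Nil)

lemma ll_addr_last_root: "x \<in> verts (ts @ [PNode a cs]) \<Longrightarrow> x \<noteq> [length ts] \<Longrightarrow> ll_addr [length ts] x"
  unfolding verts_snoc ll_addr_def below_def
  by (auto elim!: verts_ConsE dest: verts_ne_Nil intro: exI[of _ "[]"])

lemma not_ll_addr_last_root: "x \<in> verts (ts @ [PNode a cs]) \<Longrightarrow> \<not> ll_addr x [length ts]"
  unfolding verts_snoc ll_addr_def below_def
  by (auto elim!: verts_ConsE dest: verts_ne_Nil simp: append_eq_Cons_conv Cons_eq_append_conv)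

lemma ll_addr_Cons: "q \<noteq> [] \<Longrightarrow> ll_addr (n # q) (n # q') \<longleftrightarrow> ll_addr q q'"
  unfolding ll_addr_def below_def by (auto simp: Cons_eq_append_conv)

lemma ll_addr_irrefl: "\<not> ll_addr v v"
  unfolding ll_addr_def below_def by auto

section \<open>Arborification\<close>

lemma arb_rev_linexts: "arb f = image_mset (map (dec f)) (mset_set (rev_linexts (verts f) (ll f)))"
  by (simp add: arb_def rev_linexts_nth_conv)

lemma rev_linexts_set: "x \<in> rev_linexts V R \<Longrightarrow> set x = V"
  by (simp add: rev_linexts_def)

lemma arb_Nil [simp]: "arb [] = {#[]#}"
  by (simp add: arb_rev_linexts)

lemma arb_length: assumes "w \<in># arb f" shows "length w = nverts f"
proof -
  have "w \<in> map (dec f) ` rev_linexts (verts f) (ll f)"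
    using assms by (simp add: arb_rev_linexts finite_rev_linexts finite_verts)
  then obtain x where "x \<in> rev_linexts (verts f) (ll f)" "w = map (dec f) x"
    by blast
  then show ?thesis
    by (auto simp: nverts_def rev_linexts_def distinct_card[symmetric])
qed

text \<open>The last root is \<open>\<ll>\<close>-below every other vertex, and the trees before it are
\<open>\<ll>\<close>-incomparable with its children.\<close>

lemma mset_rev_linexts_snoc:
  "mset_set (rev_linexts (verts (ts @ [PNode a cs])) (ll (ts @ [PNode a cs]))) =
     image_mset (\<lambda>w. w @ [[length ts]])
       (mshuf (mset_set (rev_linexts (verts ts) (ll ts)))
          (image_mset (map (Cons (length ts))) (mset_set (rev_linexts (verts cs) (ll cs)))))"
proof -
  define f where "f = ts @ [PNode a cs]"
  define n where "n = length ts"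
  define A where "A = verts ts"
  define B where "B = Cons n ` verts cs"
  define LL where "LL = {(v, w). ll_addr v w}"
  have VF: "verts f = A \<union> B \<union> {[n]}"
    unfolding f_def A_def B_def n_def verts_snoc by blast
  have nA: "[n] \<notin> A" and nB: "[n] \<notin> B" and AB: "A \<inter> B = {}"
    unfolding A_def B_def n_def using verts_hd_less verts_ne_Nil[of _ cs] by fastforce+
  have "rev_linexts (verts f) (ll f) = rev_linexts (verts f) LL"
    by (rule rev_linexts_cong) (auto simp: ll_char LL_def)
  also have "\<dots> = (\<lambda>w. w @ [[n]]) ` rev_linexts (A \<union> B) LL"
  proof -
    have "rev_linexts (verts f) LL = (\<lambda>w. w @ [[n]]) ` rev_linexts (verts f - {[n]}) LL"
      by (rule rev_linexts_snoc)
        (use VF ll_addr_last_root[of _ ts a cs] not_ll_addr_last_root[of _ ts a cs] in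
          \<open>auto simp: LL_def ll_addr_irrefl f_def n_def\<close>)
    moreover have "verts f - {[n]} = A \<union> B"
      using VF nA nB by blast
    ultimately show ?thesis by simp
  qed
  finally have "mset_set (rev_linexts (verts f) (ll f)) =
      image_mset (\<lambda>w. w @ [[n]]) (mset_set (rev_linexts (A \<union> B) LL))"
    by (simp add: image_mset_mset_set inj_on_def)
  also have "mset_set (rev_linexts (A \<union> B) LL) =
      mshuf (mset_set (rev_linexts A LL)) (mset_set (rev_linexts B LL))"
  proof (rule mset_rev_linexts_Un)
    show "finite A" "finite B" "A \<inter> B = {}"
      using AB by (simp_all add: A_def B_def finite_verts)
    fix x y assume "x \<in> A" "y \<in> B"
    then show "(x, y) \<notin> LL \<and> (y, x) \<notin> LL"
      using ll_addr_left_last[of x ts] ll_addr_last_left[of x ts _ cs]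
      by (auto simp: A_def B_def n_def LL_def)
  qed
  also have "rev_linexts A LL = rev_linexts (verts ts) (ll ts)"
    unfolding A_def by (rule rev_linexts_cong) (auto simp: ll_char LL_def)
  also have "rev_linexts B LL = map (Cons n) ` rev_linexts (verts cs) (ll cs)"
    unfolding B_def
  proof (rule rev_linexts_map)
    show "(n # x, n # y) \<in> LL \<longleftrightarrow> (x, y) \<in> ll cs" if "x \<in> verts cs" "y \<in> verts cs" for x y
      using that ll_addr_Cons[of x n y] verts_ne_Nil[of x cs] by (auto simp: LL_def ll_char)
  qed simp
  finally show ?thesis
    by (simp add: f_def n_def image_mset_mset_set[symmetric] inj_on_def)
qed

lemma arb_snoc: "arb (ts @ [PNode a cs]) = image_mset (\<lambda>w. w @ [a]) (mshuf (arb ts) (arb cs))"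
proof -
  define f where "f = ts @ [PNode a cs]"
  define n where "n = length ts"
  define EA where "EA = mset_set (rev_linexts (verts ts) (ll ts))"
  define EC where "EC = mset_set (rev_linexts (verts cs) (ll cs))"
  have "arb f = image_mset (map (dec f)) (image_mset (\<lambda>w. w @ [[n]]) (mshuf EA (image_mset (map (Cons n)) EC)))"
    unfolding arb_rev_linexts[of f] by (simp only: f_def n_def EA_def EC_def mset_rev_linexts_snoc)
  also have "\<dots> = image_mset (\<lambda>w. w @ [a]) (image_mset (map (dec f)) (mshuf EA (image_mset (map (Cons n)) EC)))"
    by (simp add: multiset.map_comp o_def f_def n_def dec_snoc_root)
  also have "\<dots> = image_mset (\<lambda>w. w @ [a]) (mshuf (image_mset (map (dec f)) EA) (image_mset (map (dec f) \<circ> map (Cons n)) EC))"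
    by (simp only: mshuf_map multiset.map_comp)
  also have "image_mset (map (dec f)) EA = arb ts"
    unfolding EA_def arb_rev_linexts
    by (rule image_mset_cong) (auto simp: f_def dec_snoc_left finite_rev_linexts finite_verts dest!: rev_linexts_set)
  also have "image_mset (map (dec f) \<circ> map (Cons n)) EC = arb cs"
    unfolding EC_def arb_rev_linexts
    by (rule image_mset_cong) (auto simp: f_def n_def dec_snoc_child finite_rev_linexts finite_verts dest!: rev_linexts_set)
  finally show ?thesis
    unfolding f_def .
qed

lemma arb_shuf: "(\<Sum>\<rho>\<in>#shuf \<sigma> \<tau>. arb \<rho>) = mshuf (arb \<sigma>) (arb \<tau>)"
proof (induction "length \<sigma> + length \<tau>" arbitrary: \<sigma> \<tau> rule: less_induct)
  case less
  show ?case
  proof (cases "\<sigma> = [] \<or> \<tau> = []")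
    case True
    then show ?thesis by auto
  next
    case False
    then obtain \<sigma>' a cs \<tau>' b ds where st: "\<sigma> = \<sigma>' @ [PNode a cs]" "\<tau> = \<tau>' @ [PNode b ds]"
      by (metis ptree.exhaust rev_exhaust)
    have IH: "(\<Sum>\<rho>\<in>#shuf \<sigma>' \<tau>. arb \<rho>) = mshuf (arb \<sigma>') (arb \<tau>)"
      "(\<Sum>\<rho>\<in>#shuf \<sigma> \<tau>'. arb \<rho>) = mshuf (arb \<sigma>) (arb \<tau>')"
      using less st by simp_all
    have "(\<Sum>\<rho>\<in>#shuf \<sigma> \<tau>. arb \<rho>) =
        (\<Sum>\<rho>\<in>#shuf \<sigma>' \<tau>. arb (\<rho> @ [PNode a cs])) + (\<Sum>\<rho>\<in>#shuf \<sigma> \<tau>'. arb (\<rho> @ [PNode b ds]))"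
      unfolding st shuf_snoc by (simp add: multiset.map_comp o_def)
    also have "\<dots> = image_mset (\<lambda>w. w @ [a]) (mshuf (mshuf (arb \<sigma>') (arb \<tau>)) (arb cs))
        + image_mset (\<lambda>w. w @ [b]) (mshuf (mshuf (arb \<sigma>) (arb \<tau>')) (arb ds))"
      unfolding arb_snoc IH[symmetric]
      by (simp add: mshuf_sum_mset_left image_mset_sum_mset multiset.map_comp o_def)
    also have "\<dots> = image_mset (\<lambda>w. w @ [a]) (mshuf (mshuf (arb \<sigma>') (arb cs)) (arb \<tau>))
        + image_mset (\<lambda>w. w @ [b]) (mshuf (arb \<sigma>) (mshuf (arb \<tau>') (arb ds)))"
      by (simp add: mshuf_right_commute mshuf_assoc)
    also have "\<dots> = mshuf (arb \<sigma>) (arb \<tau>)"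
      unfolding st arb_snoc mshuf_snoc ..
    finally show ?thesis .
  qed
qed

lemma restr_shift:
  fixes t :: "'a ptree" and ts :: "'a pforest"
  shows "restr_t (p @ q) W t = restr_t q {r. p @ r \<in> W} t"
  and "restr_f (p @ q) k W ts = restr_f q k {r. p @ r \<in> W} ts"
  by (induction q W t and q k W ts rule: restr_t_restr_f.induct) auto

lemma restr_cong_aux:
  fixes t :: "'a ptree" and ts :: "'a pforest"
  shows "(\<forall>r. p @ r \<in> W \<longleftrightarrow> p @ r \<in> W') \<Longrightarrow> restr_t p W t = restr_t p W' t"
  and "(\<forall>i r. k \<le> i \<longrightarrow> i < k + length ts \<longrightarrow> (p @ i # r \<in> W \<longleftrightarrow> p @ i # r \<in> W')) \<Longrightarrow> restr_f p k W ts = restr_f p k W' ts"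
proof (induction p W t and p k W ts rule: restr_t_restr_f.induct)
  case (1 p W a cs)
  have "p \<in> W \<longleftrightarrow> p \<in> W'" using "1.prems"[rule_format, of "[]"] by simp
  moreover have "restr_f p 0 W cs = restr_f p 0 W' cs"
    using "1.prems" by (cases "p \<in> W") (intro "1.IH"; auto)+
  ultimately show ?case by simp
next
  case (2 p k W)
  then show ?case by simp
next
  case (3 p k W t ts)
  have "restr_t (p @ [k]) W t = restr_t (p @ [k]) W' t"
    using "3.prems" by (intro "3.IH"(1)) auto
  moreover have "restr_f p (Suc k) W ts = restr_f p (Suc k) W' ts"
    using "3.prems" by (intro "3.IH"(2)) auto
  ultimately show ?case by simp
qed

lemma restr_f_append: "restr_f p k W (xs @ ys) = restr_f p k W xs @ restr_f p (k + length xs) W ys"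
  by (induction xs arbitrary: k) auto

lemma restr_snoc: "restr (ts @ [PNode a cs]) W = restr ts W @
   (if [length ts] \<in> W then [PNode a (restr cs {q. length ts # q \<in> W})] else restr cs {q. length ts # q \<in> W})"
proof -
  have "restr_f [length ts] 0 W cs = restr cs {q. length ts # q \<in> W}"
    using restr_shift(2)[of "[length ts]" "[]" 0 W cs] by (simp add: restr_def)
  then show ?thesis by (simp add: restr_def restr_f_append)
qed

lemma restr_cong: "(\<And>i r. i < length ts \<Longrightarrow> (i # r \<in> W \<longleftrightarrow> i # r \<in> W')) \<Longrightarrow> restr ts W = restr ts W'"
  unfolding restr_def by (rule restr_cong_aux(2)) auto

lemma restr_empty_tf:
  fixes t :: "'a ptree" and ts :: "'a pforest"
  shows "restr_t p {} t = []" and "restr_f p k {} ts = []"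
  by (induction p "{}::nat list set" t and p k "{}::nat list set" ts rule: restr_t_restr_f.induct) auto

lemma restr_empty [simp]: "restr ts {} = []"
  by (simp add: restr_def restr_empty_tf)

lemma restr_verts: "restr f (verts f) = f"
proof (induction f rule: forest_snoc_induct)
  case Nil
  then show ?case by (simp add: restr_def)
next
  case (snoc ts a cs)
  have left: "restr ts (verts (ts @ [PNode a cs])) = ts"
  proof -
    have "restr ts (verts (ts @ [PNode a cs])) = restr ts (verts ts)"
      by (rule restr_cong) (auto simp: verts_snoc)
    then show ?thesis using snoc by simp
  qed
  have right: "restr cs {q. length ts # q \<in> verts (ts @ [PNode a cs])} = cs"
  proof -
    have "restr cs {q. length ts # q \<in> verts (ts @ [PNode a cs])} = restr cs (verts cs)"
      by (rule restr_cong) (auto simp: verts_snoc dest: verts_hd_less)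
    then show ?thesis using snoc by simp
  qed
  show ?case using left right by (simp add: restr_snoc verts_snoc)
qed

lemma restr_snoc_left: "C \<subseteq> verts ts \<Longrightarrow> restr (ts @ [PNode a cs]) C = restr ts C"
proof -
  assume "C \<subseteq> verts ts"
  then have "[length ts] \<notin> C" "{q. length ts # q \<in> C} = {}"
    using verts_hd_less[of "length ts" _ ts] by auto
  then show ?thesis
    by (simp add: restr_snoc)
qed

lemma restr_snoc_Cons: "C \<subseteq> verts cs \<Longrightarrow> restr (ts @ [PNode a cs]) (Cons (length ts) ` C) = restr cs C"
proof -
  assume "C \<subseteq> verts cs"
  then have "[length ts] \<notin> Cons (length ts) ` C"
    using verts_ne_Nil[of _ cs] by auto
  moreover have "restr ts (Cons (length ts) ` C) = restr ts {}"
    by (rule restr_cong) auto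
  ultimately show ?thesis
    by (simp add: restr_snoc image_iff)
qed

section \<open>Downsets\<close>

definition downsets :: "'a pforest \<Rightarrow> nat list set set" where "downsets f = {D. downclosed f D}"

lemma downclosed_iff_ll_addr: "downclosed f D \<longleftrightarrow> D \<subseteq> verts f \<and> (\<forall>v\<in>D. \<forall>w\<in>verts f. ll_addr w v \<longrightarrow> w \<in> D)"
  unfolding downclosed_def ll_char by blast

lemma finite_downsets: "finite (downsets f)"
proof -
  have "downsets f \<subseteq> Pow (verts f)" by (auto simp: downsets_def downclosed_def)
  then show ?thesis using finite_verts finite_subset by blast
qed

lemma downsets_Nil: "downsets ([]::'a pforest) = {{}}"
  by (auto simp: downsets_def downclosed_def)

definition snoc_downset :: "nat \<Rightarrow> nat list set \<Rightarrow> nat list set \<Rightarrow> nat list set" where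
  "snoc_downset n D1 D2 = insert [n] (D1 \<union> Cons n ` D2)"

text \<open>A nonempty downset contains the last root, as that root is \<open>\<ll>\<close>-below all other
vertices.\<close>

lemma downsets_snoc_cases:
  assumes "D \<in> downsets (ts @ [PNode a cs])" "D \<noteq> {}"
  obtains D1 D2 where "D1 \<in> downsets ts" "D2 \<in> downsets cs" "D = snoc_downset (length ts) D1 D2"
proof -
  define n where "n = length ts"
  define f where "f = ts @ [PNode a cs]"
  have vf: "verts f = verts ts \<union> {[n]} \<union> Cons n ` verts cs"
    unfolding f_def n_def verts_snoc ..
  have Dsub: "D \<subseteq> verts f" and Dcl: "\<And>v w. v \<in> D \<Longrightarrow> w \<in> verts f \<Longrightarrow> ll_addr w v \<Longrightarrow> w \<in> D"
    using assms(1) unfolding f_def downsets_def downclosed_iff_ll_addr by blast+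
  obtain v where v: "v \<in> D"
    using assms(2) by blast
  have root: "[n] \<in> D"
  proof (cases "v = [n]")
    case False
    then have "ll_addr [n] v"
      using ll_addr_last_root[of v ts a cs] v Dsub unfolding f_def n_def by blast
    then show ?thesis
      using Dcl[of v "[n]"] v vf by blast
  qed (use v in simp)
  define D1 where "D1 = D \<inter> verts ts"
  define D2 where "D2 = {q \<in> verts cs. n # q \<in> D}"
  have "D1 \<in> downsets ts"
    unfolding downsets_def downclosed_iff_ll_addr D1_def using Dcl vf by blast
  moreover have "D2 \<in> downsets cs"
    unfolding downsets_def downclosed_iff_ll_addr
  proof (intro CollectI conjI ballI impI)
    fix v w assume vw: "v \<in> D2" "w \<in> verts cs" "ll_addr w v"
    then have "ll_addr (n # w) (n # v)"
      using ll_addr_Cons[of w n v] verts_ne_Nil[of w cs] by simp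
    then show "w \<in> D2"
      using Dcl[of "n # v" "n # w"] vw vf unfolding D2_def by blast
  qed (auto simp: D2_def)
  moreover have "D = snoc_downset n D1 D2"
    unfolding snoc_downset_def D1_def D2_def using Dsub vf root by blast
  ultimately show ?thesis
    using that n_def by blast
qed

lemma snoc_downset_in_downsets:
  assumes D1: "D1 \<in> downsets ts" and D2: "D2 \<in> downsets cs"
  shows "snoc_downset (length ts) D1 D2 \<in> downsets (ts @ [PNode a cs])"
proof -
  define n where "n = length ts"
  define f where "f = ts @ [PNode a cs]"
  define D where "D = snoc_downset n D1 D2"
  have vf: "verts f = verts ts \<union> {[n]} \<union> Cons n ` verts cs"
    unfolding f_def n_def verts_snoc ..
  have D1s: "D1 \<subseteq> verts ts" and D1c: "\<And>v w. v \<in> D1 \<Longrightarrow> w \<in> verts ts \<Longrightarrow> ll_addr w v \<Longrightarrow> w \<in> D1"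
    using D1 unfolding downsets_def downclosed_iff_ll_addr by blast+
  have D2s: "D2 \<subseteq> verts cs" and D2c: "\<And>v w. v \<in> D2 \<Longrightarrow> w \<in> verts cs \<Longrightarrow> ll_addr w v \<Longrightarrow> w \<in> D2"
    using D2 unfolding downsets_def downclosed_iff_ll_addr by blast+
  have "downclosed f D"
    unfolding downclosed_iff_ll_addr
  proof (intro conjI ballI impI)
    show "D \<subseteq> verts f"
      using D1s D2s vf unfolding D_def snoc_downset_def by blast
  next
    fix v w assume v: "v \<in> D" and w: "w \<in> verts f" and L: "ll_addr w v"
    have "v \<noteq> [n]"
      using not_ll_addr_last_root[of w ts a cs] w L unfolding f_def n_def by blast
    then consider "v \<in> D1" | q' where "v = n # q'" "q' \<in> D2"
      using v unfolding D_def snoc_downset_def by blast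
    then show "w \<in> D"
    proof cases
      case 1
      then have "w \<notin> Cons n ` verts cs"
        using ll_addr_last_left[of v ts _ cs] D1s L unfolding n_def by blast
      then show ?thesis
        using w vf D1c[OF 1] L unfolding D_def snoc_downset_def by blast
    next
      case 2
      then have "w \<notin> verts ts"
        using ll_addr_left_last[of w ts q'] D2s L unfolding n_def by blast
      then consider "w = [n]" | q where "w = n # q" "q \<in> verts cs"
        using w vf by blast
      then show ?thesis
      proof cases
        case 3: (2 q)
        then have "ll_addr q q'"
          using L 2 ll_addr_Cons[of q n q'] verts_ne_Nil[of q cs] by simp
        then show ?thesis
          using D2c 2 3 unfolding D_def snoc_downset_def by blast
      qed (simp add: D_def snoc_downset_def)
    qed
  qed
  then show ?thesis
    by (simp add: downsets_def f_def D_def n_def)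
qed

lemma downsets_snoc:
  "downsets (ts @ [PNode a cs]) =
     insert {} ((\<lambda>(D1, D2). snoc_downset (length ts) D1 D2) ` (downsets ts \<times> downsets cs))"
proof (intro set_eqI iffI)
  fix D assume D: "D \<in> downsets (ts @ [PNode a cs])"
  show "D \<in> insert {} ((\<lambda>(D1, D2). snoc_downset (length ts) D1 D2) ` (downsets ts \<times> downsets cs))"
  proof (cases "D = {}")
    case False
    with D show ?thesis
      by (elim downsets_snoc_cases) auto
  qed simp
next
  fix D assume "D \<in> insert {} ((\<lambda>(D1, D2). snoc_downset (length ts) D1 D2) ` (downsets ts \<times> downsets cs))"
  then show "D \<in> downsets (ts @ [PNode a cs])"
    using snoc_downset_in_downsets[of _ ts _ cs a] by (auto simp: downsets_def downclosed_def)
qed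

lemma inj_on_snoc_downset: "inj_on (\<lambda>(D1, D2). snoc_downset (length ts) D1 D2) (downsets ts \<times> downsets cs)"
proof (rule inj_onI, clarify)
  fix D1 D2 E1 E2 assume H: "D1 \<in> downsets ts" "D2 \<in> downsets cs" "E1 \<in> downsets ts" "E2 \<in> downsets cs"
    "snoc_downset (length ts) D1 D2 = snoc_downset (length ts) E1 E2"
  have s: "D1 \<subseteq> verts ts" "E1 \<subseteq> verts ts" "D2 \<subseteq> verts cs" "E2 \<subseteq> verts cs"
    using H by (auto simp: downsets_def downclosed_def)
  have r1: "snoc_downset (length ts) X1 X2 \<inter> verts ts = X1" if "X1 \<subseteq> verts ts" for X1 X2
    using that verts_hd_less unfolding snoc_downset_def by fastforce
  have r2: "{q \<in> verts cs. length ts # q \<in> snoc_downset (length ts) X1 X2} = X2" if "X1 \<subseteq> verts ts" "X2 \<subseteq> verts cs" for X1 X2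
    using that verts_hd_less verts_ne_Nil[where f=cs] unfolding snoc_downset_def by fastforce
  show "D1 = E1 \<and> D2 = E2" using r1[of D1 D2] r1[of E1 E2] r2[of D1 D2] r2[of E1 E2] s H(5) by metis
qed

lemma sum_downsets_snoc:
  "(\<Sum>D\<in>downsets (ts @ [PNode a cs]). F D) = F {} + (\<Sum>D1\<in>downsets ts. \<Sum>D2\<in>downsets cs. F (snoc_downset (length ts) D1 D2))"
proof -
  have ne: "{} \<notin> (\<lambda>(D1, D2). snoc_downset (length ts) D1 D2) ` (downsets ts \<times> downsets cs)" by (auto simp: snoc_downset_def)
  have fin: "finite ((\<lambda>(D1, D2). snoc_downset (length ts) D1 D2) ` (downsets ts \<times> downsets cs))"
    using finite_downsets by blast
  have "(\<Sum>D\<in>downsets (ts @ [PNode a cs]). F D) = F {} + (\<Sum>D\<in>(\<lambda>(D1, D2). snoc_downset (length ts) D1 D2) ` (downsets ts \<times> downsets cs). F D)"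
    unfolding downsets_snoc using ne fin by simp
  also have "(\<Sum>D\<in>(\<lambda>(D1, D2). snoc_downset (length ts) D1 D2) ` (downsets ts \<times> downsets cs). F D) = (\<Sum>p\<in>downsets ts \<times> downsets cs. F (snoc_downset (length ts) (fst p) (snd p)))"
    by (subst sum.reindex[OF inj_on_snoc_downset]) (simp add: case_prod_beta)
  also have "\<dots> = (\<Sum>D1\<in>downsets ts. \<Sum>D2\<in>downsets cs. F (snoc_downset (length ts) D1 D2))"
    by (simp add: sum.cartesian_product case_prod_beta)
  finally show ?thesis .
qed

lemma restr_snoc_downset:
  "D1 \<in> downsets ts \<Longrightarrow>
    restr (ts @ [PNode a cs]) (snoc_downset (length ts) D1 D2) = restr ts D1 @ [PNode a (restr cs D2)]"
proof -
  assume "D1 \<in> downsets ts"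
  then have s: "D1 \<subseteq> verts ts"
    by (auto simp: downsets_def downclosed_def)
  have left: "restr ts (snoc_downset (length ts) D1 D2) = restr ts D1"
    by (rule restr_cong) (auto simp: snoc_downset_def)
  have nD1: "length ts # r \<notin> D1" for r using s verts_hd_less by fastforce
  have right: "restr cs {q. length ts # q \<in> snoc_downset (length ts) D1 D2} = restr cs D2"
    by (rule restr_cong) (use nD1 in \<open>auto simp: snoc_downset_def\<close>)
  show ?thesis using left right by (simp add: restr_snoc snoc_downset_def)
qed

lemma verts_diff_snoc_downset:
  assumes "D1 \<in> downsets ts"
  shows "verts (ts @ [PNode a cs]) - snoc_downset (length ts) D1 D2 =
    (verts ts - D1) \<union> Cons (length ts) ` (verts cs - D2)"
  using assms
  by (auto simp: downsets_def downclosed_def verts_snoc snoc_downset_def dest: verts_hd_less verts_ne_Nil)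

definition component :: "('v \<times> 'v) set \<Rightarrow> 'v set \<Rightarrow> 'v \<Rightarrow> 'v set" where
  "component R V v = {w\<in>V. (v, w) \<in> R\<^sup>*}"

lemma comps_eq_component: "comps f V' = component (comp_rel f V') V' ` V'"
  by (auto simp: comps_def component_def)

lemma component_self: "v \<in> V \<Longrightarrow> v \<in> component R V v" by (simp add: component_def)
lemma component_subset: "component R V v \<subseteq> V" by (auto simp: component_def)

lemma component_restrict:
  assumes R: "R \<subseteq> (X \<union> Y) \<times> (X \<union> Y)" and cross: "\<And>x y. x \<in> X \<Longrightarrow> y \<in> Y \<Longrightarrow> (x, y) \<notin> R \<and> (y, x) \<notin> R"
    and v: "v \<in> X"
  shows "component R (X \<union> Y) v = component (R \<inter> X \<times> X) X v"
proof -
  have key: "w \<in> X \<and> (v, w) \<in> (R \<inter> X \<times> X)\<^sup>*" if "(v, w) \<in> R\<^sup>*" for w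
    using that
  proof (induction rule: rtrancl_induct)
    case base show ?case using v by simp
  next
    case (step y z)
    have "z \<in> X \<union> Y" using step(2) R by blast
    moreover have "z \<notin> Y" using step cross by blast
    ultimately have "z \<in> X" by blast
    then show ?case using step by (meson IntI mem_Sigma_iff rtrancl.rtrancl_into_rtrancl)
  qed
  have "(R \<inter> X \<times> X)\<^sup>* \<subseteq> R\<^sup>*" by (rule rtrancl_mono) blast
  then show ?thesis unfolding component_def using key by blast
qed

lemma component_map:
  assumes inj: "inj_on \<psi> X" and R: "R \<subseteq> X \<times> X" and v: "v \<in> X"
  shows "component (map_prod \<psi> \<psi> ` R) (\<psi> ` X) (\<psi> v) = \<psi> ` component R X v"
proof -
  have A: "\<exists>w\<in>X. z = \<psi> w \<and> (v, w) \<in> R\<^sup>*" if "(\<psi> v, z) \<in> (map_prod \<psi> \<psi> ` R)\<^sup>*" for z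
    using that
  proof (induction rule: rtrancl_induct)
    case base then show ?case using v by blast
  next
    case (step y z)
    then obtain w where w: "w \<in> X" "y = \<psi> w" "(v, w) \<in> R\<^sup>*" by blast
    from step(2) obtain a b where ab: "(a, b) \<in> R" "y = \<psi> a" "z = \<psi> b" by auto
    have abX: "a \<in> X" "b \<in> X" using ab R by auto
    then have "a = w" using inj w ab unfolding inj_on_def by metis
    then have "(v, b) \<in> R\<^sup>*" using ab w by (meson rtrancl.rtrancl_into_rtrancl)
    then show ?case using ab abX by blast
  qed
  have B: "(\<psi> v, \<psi> w) \<in> (map_prod \<psi> \<psi> ` R)\<^sup>*" if "(v, w) \<in> R\<^sup>*" for w
    using that
  proof (induction rule: rtrancl_induct)
    case base then show ?case by simp
  next
    case (step y z)
    have "(\<psi> y, \<psi> z) \<in> map_prod \<psi> \<psi> ` R" using step(2) by force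
    then show ?case using step(3) by (meson rtrancl.rtrancl_into_rtrancl)
  qed
  show ?thesis unfolding component_def
  proof (intro set_eqI iffI)
    fix z assume "z \<in> {w \<in> \<psi> ` X. (\<psi> v, w) \<in> (map_prod \<psi> \<psi> ` R)\<^sup>*}"
    then obtain w where "w \<in> X" "z = \<psi> w" "(v, w) \<in> R\<^sup>*" using A by blast
    then show "z \<in> \<psi> ` {w \<in> X. (v, w) \<in> R\<^sup>*}" by blast
  next
    fix z assume "z \<in> \<psi> ` {w \<in> X. (v, w) \<in> R\<^sup>*}"
    then show "z \<in> {w \<in> \<psi> ` X. (\<psi> v, w) \<in> (map_prod \<psi> \<psi> ` R)\<^sup>*}" using B by blast
  qed
qed

lemma ll_snoc_left:
  "v \<in> verts ts \<Longrightarrow> w \<in> verts ts \<Longrightarrow> (v, w) \<in> ll (ts @ [PNode a cs]) \<longleftrightarrow> (v, w) \<in> ll ts"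
  by (simp add: ll_char verts_snoc)

lemma ll_snoc_Cons:
  "u \<in> verts cs \<Longrightarrow> w \<in> verts cs \<Longrightarrow>
    (length ts # u, length ts # w) \<in> ll (ts @ [PNode a cs]) \<longleftrightarrow> (u, w) \<in> ll cs"
  by (auto simp: ll_char verts_snoc ll_addr_Cons dest: verts_ne_Nil)

lemma comps_snoc:
  assumes sub: "V' \<subseteq> verts (ts @ [PNode a cs])" and nV: "[length ts] \<notin> V'"
  shows "comps (ts @ [PNode a cs]) V' = comps ts (V' \<inter> verts ts) \<union>
     image (Cons (length ts)) ` comps cs {q \<in> verts cs. length ts # q \<in> V'}"
proof -
  define n where "n = length ts"
  define f where "f = ts @ [PNode a cs]"
  define V1 where "V1 = V' \<inter> verts ts"
  define V2 where "V2 = {q \<in> verts cs. n # q \<in> V'}"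
  define Y where "Y = Cons n ` V2"
  define R where "R = comp_rel f V'"
  have VV: "V' = V1 \<union> Y" using sub nV unfolding V1_def Y_def V2_def n_def verts_snoc by blast
  have Rsub: "R \<subseteq> (V1 \<union> Y) \<times> (V1 \<union> Y)" unfolding R_def comp_rel_def VV by blast
  have cross: "(x, y) \<notin> R \<and> (y, x) \<notin> R" if xy: "x \<in> V1" "y \<in> Y" for x y
  proof -
    obtain q where q: "y = n # q" "q \<in> verts cs" using xy unfolding Y_def V2_def by blast
    have "x \<in> verts ts" using xy unfolding V1_def by blast
    then have "\<not> ll_addr x y" "\<not> ll_addr y x" using ll_addr_left_last[of x ts q] ll_addr_last_left[of x ts q cs] q
      unfolding n_def by auto
    then show ?thesis unfolding R_def comp_rel_def ll_char by auto
  qed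
  have R1: "R \<inter> V1 \<times> V1 = comp_rel ts V1"
    using sub unfolding R_def comp_rel_def V1_def f_def by (auto simp: ll_snoc_left)
  have R2: "R \<inter> Y \<times> Y = map_prod (Cons n) (Cons n) ` comp_rel cs V2"
    unfolding R_def comp_rel_def Y_def V2_def f_def n_def
    by (auto simp: ll_snoc_Cons image_iff)
  have c1: "component R V' v = component (comp_rel ts V1) V1 v" if "v \<in> V1" for v
    unfolding VV R1[symmetric] by (rule component_restrict[OF Rsub cross that])
  have c2: "component R V' (n # q) = Cons n ` component (comp_rel cs V2) V2 q" if "q \<in> V2" for q
  proof -
    have "component R V' (n # q) = component R (Y \<union> V1) (n # q)" using VV by (simp add: Un_commute)
    also have "\<dots> = component (R \<inter> Y \<times> Y) Y (n # q)"
      by (rule component_restrict) (use Rsub cross that Y_def in auto)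
    also have "\<dots> = component (map_prod (Cons n) (Cons n) ` comp_rel cs V2) (Cons n ` V2) (n # q)"
      by (subst R2) (simp add: Y_def)
    also have "\<dots> = Cons n ` component (comp_rel cs V2) V2 q"
      by (rule component_map) (auto simp: that comp_rel_def)
    finally show ?thesis .
  qed
  have "comps f V' = component R V' ` V1 \<union> component R V' ` Y" unfolding comps_eq_component R_def[symmetric] using VV by blast
  also have "component R V' ` V1 = comps ts V1" unfolding comps_eq_component using c1 by auto
  also have "component R V' ` Y = image (Cons n) ` comps cs V2" unfolding comps_eq_component Y_def using c2
    by (auto simp: image_image)
  finally show ?thesis unfolding f_def n_def V1_def V2_def .
qed

lemma comps_nonempty_subset: "C \<in> comps f V' \<Longrightarrow> C \<noteq> {} \<and> C \<subseteq> V'"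
  unfolding comps_eq_component using component_self component_subset by fastforce

lemma finite_comps: "finite V' \<Longrightarrow> finite (comps f V')"
  unfolding comps_eq_component by simp

definition comp_prod :: "('b list \<Rightarrow> real) \<Rightarrow> 'b pforest \<Rightarrow> nat list set \<Rightarrow> real" where
  "comp_prod X f V' = (\<Prod>C\<in>comps f V'. lin X (arb (restr f C)))"

lemma comp_prod_empty [simp]: "comp_prod X f {} = 1"
  by (simp add: comp_prod_def comps_def)

lemma comp_prod_snoc:
  assumes sub: "V' \<subseteq> verts (ts @ [PNode a cs])" and nV: "[length ts] \<notin> V'"
  shows "comp_prod X (ts @ [PNode a cs]) V' =
    comp_prod X ts (V' \<inter> verts ts) * comp_prod X cs {q \<in> verts cs. length ts # q \<in> V'}"
proof -
  define n where "n = length ts"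
  define f where "f = ts @ [PNode a cs]"
  define V1 where "V1 = V' \<inter> verts ts"
  define V2 where "V2 = {q \<in> verts cs. n # q \<in> V'}"
  have fin: "finite (comps ts V1)" "finite (image (Cons n) ` comps cs V2)"
    unfolding V1_def V2_def using finite_verts[of ts] finite_verts[of cs] by (simp_all add: finite_comps)
  have disj: "comps ts V1 \<inter> image (Cons n) ` comps cs V2 = {}"
  proof -
    have "C = {}" if "C \<in> comps ts V1" "C \<in> image (Cons n) ` comps cs V2" for C
    proof -
      have "C \<subseteq> verts ts"
        using comps_nonempty_subset[OF that(1)] unfolding V1_def by blast
      moreover have "\<forall>x\<in>C. hd x = n"
        using that(2) by auto
      ultimately show ?thesis
        using verts_hd_less[of n _ ts] unfolding n_def
        by (metis equals0I list.collapse subsetD verts_ne_Nil less_irrefl)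
    qed
    then show ?thesis
      using comps_nonempty_subset by blast
  qed
  have "comp_prod X f V' = (\<Prod>C\<in>comps ts V1. lin X (arb (restr f C))) *
      (\<Prod>C\<in>image (Cons n) ` comps cs V2. lin X (arb (restr f C)))"
    unfolding comp_prod_def f_def n_def V1_def V2_def comps_snoc[OF sub nV]
    by (rule prod.union_disjoint) (use fin disj in \<open>simp_all add: n_def V1_def V2_def\<close>)
  also have "(\<Prod>C\<in>comps ts V1. lin X (arb (restr f C))) = comp_prod X ts V1"
    unfolding comp_prod_def f_def V1_def using comps_nonempty_subset restr_snoc_left
    by (metis (no_types, lifting) le_inf_iff prod.cong)
  also have "(\<Prod>C\<in>image (Cons n) ` comps cs V2. lin X (arb (restr f C))) = comp_prod X cs V2"
  proof -
    have "inj_on (image (Cons n)) (comps cs V2)"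
      by (rule inj_onI) (simp add: inj_image_eq_iff)
    moreover have "restr f (Cons n ` C) = restr cs C" if "C \<in> comps cs V2" for C
      using comps_nonempty_subset[OF that] restr_snoc_Cons[of _ cs ts a]
      unfolding f_def n_def V2_def by blast
    ultimately show ?thesis
      unfolding comp_prod_def by (simp add: prod.reindex)
  qed
  finally show ?thesis
    unfolding f_def V1_def V2_def n_def .
qed

lemma comp_prod_verts: "comp_prod X (ts @ [PNode a cs]) (verts (ts @ [PNode a cs])) = lin X (arb (ts @ [PNode a cs]))"
proof -
  define f where "f = ts @ [PNode a cs]"
  define n where "n = length ts"
  define V where "V = verts f"
  define R where "R = comp_rel f V"
  have nV: "[n] \<in> V" unfolding V_def f_def n_def verts_snoc by blast
  have toroot: "([n], w) \<in> R\<^sup>*" "(w, [n]) \<in> R\<^sup>*" if "w \<in> V" for w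
  proof -
    have "([n], w) \<in> R \<and> (w, [n]) \<in> R" if "w \<noteq> [n]"
      using ll_addr_last_root[of w ts a cs] \<open>w \<in> V\<close> nV that
      unfolding R_def comp_rel_def ll_char V_def f_def n_def by auto
    then show "([n], w) \<in> R\<^sup>*" "(w, [n]) \<in> R\<^sup>*" by (cases "w = [n]"; auto)+
  qed
  have "component R V v = V" if "v \<in> V" for v
    using toroot that unfolding component_def by (blast intro: rtrancl_trans)
  then have "comps f V = {V}" unfolding comps_eq_component R_def[symmetric] using nV by auto
  then show ?thesis unfolding comp_prod_def f_def V_def by (simp add: restr_verts)
qed

lemma mshuf_left_comm: "mshuf {#x#} (mshuf {#y#} M) = mshuf {#y#} (mshuf {#x#} M)"
  by (simp add: mshuf_assoc[symmetric] shuf_comm[of x y])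

lemma lin_shuf_comps:
  assumes mult: "\<And>\<sigma> \<tau>. lin Y (shuf \<sigma> \<tau>) = Y \<sigma> * Y \<tau>" and Y1: "Y [] = 1" and fin: "finite V'"
  shows "lin Y (shuf_comps f V') = (\<Prod>C\<in>comps f V'. Y (restr f C))"
proof -
  define g where "g = (\<lambda>C acc. mshuf {#restr f C#} acc)"
  interpret cf: comp_fun_commute g
    by unfold_locales (auto simp: fun_eq_iff g_def mshuf_left_comm)
  have "lin Y (fold_mset g {#[]#} (mset_set S)) = (\<Prod>C\<in>S. Y (restr f C))" if "finite S" for S
    using that
  proof (induction S rule: finite_induct)
    case empty then show ?case by (simp add: Y1)
  next
    case (insert x S)
    have "fold_mset g {#[]#} (mset_set (insert x S)) = g x (fold_mset g {#[]#} (mset_set S))"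
      using insert by simp
    then have "lin Y (fold_mset g {#[]#} (mset_set (insert x S))) = lin Y (mshuf {#restr f x#} (fold_mset g {#[]#} (mset_set S)))"
      by (simp add: g_def)
    also have "\<dots> = Y (restr f x) * lin Y (fold_mset g {#[]#} (mset_set S))"
      using lin_mshuf[of Y, OF mult] by simp
    finally show ?case using insert by simp
  qed
  then show ?thesis unfolding shuf_comps_def g_def[symmetric] using finite_comps[OF fin] by blast
qed

section \<open>Chen's relation\<close>

lemma sum_mset_sum_mset: "(\<Sum>x\<in>#(\<Sum>M\<in>#MM. F M). f x) = (\<Sum>M\<in>#MM. \<Sum>x\<in>#F M. (f x :: 'c::comm_monoid_add))"
  by (induction MM) auto

lemma sum_set_mset_swap: "(\<Sum>i\<in>I. \<Sum>x\<in>#M. F i x) = (\<Sum>x\<in>#M. \<Sum>i\<in>I. (F i x :: 'c::comm_monoid_add))"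
  by (induction M) (auto simp: sum.distrib)

lemma sum_arb_snoc: "(\<Sum>w\<in>#arb (ts @ [PNode a cs]). g w) = (\<Sum>u\<in>#arb ts. \<Sum>v\<in>#arb cs. \<Sum>z\<in>#shuf u v. (g (z @ [a]) :: 'c::comm_monoid_add))"
  by (simp add: arb_snoc mshuf_def sum_mset_sum_mset multiset.map_comp o_def)

lemma comp_prod_snoc_downset:
  assumes "D1 \<in> downsets ts"
  shows "comp_prod Y (ts @ [PNode a cs]) (verts (ts @ [PNode a cs]) - snoc_downset (length ts) D1 D2)
    = comp_prod Y ts (verts ts - D1) * comp_prod Y cs (verts cs - D2)"
proof -
  define n where "n = length ts"
  define V' where "V' = verts (ts @ [PNode a cs]) - snoc_downset n D1 D2"
  have V': "V' = (verts ts - D1) \<union> Cons n ` (verts cs - D2)"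
    unfolding V'_def n_def by (rule verts_diff_snoc_downset[OF assms])
  have "n # q \<notin> verts ts" for q
    using verts_hd_less unfolding n_def by blast
  then have "V' \<inter> verts ts = verts ts - D1" "{q \<in> verts cs. n # q \<in> V'} = verts cs - D2"
    unfolding V' by auto
  moreover have "V' \<subseteq> verts (ts @ [PNode a cs])" "[n] \<notin> V'"
    unfolding V'_def snoc_downset_def by blast+
  ultimately show ?thesis
    using comp_prod_snoc[of V' ts a cs Y] unfolding V'_def n_def by simp
qed

lemma sum_deconc_arb_snoc:
  assumes mult: "\<And>\<sigma> \<tau>. lin Y (shuf \<sigma> \<tau>) = Y \<sigma> * Y \<tau>"
  shows "(\<Sum>w\<in>#arb (ts @ [PNode a cs]). \<Sum>p\<in>#deconc w. Y (fst p) * g (snd p)) =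
    lin Y (arb (ts @ [PNode a cs])) * g [] +
    (\<Sum>u\<in>#arb ts. \<Sum>p\<in>#deconc u. Y (fst p) *
       (\<Sum>v\<in>#arb cs. \<Sum>q\<in>#deconc v. Y (fst q) * (\<Sum>z\<in>#shuf (snd p) (snd q). g (z @ [a]))))"
proof -
  define h where "h u v = (\<Sum>z\<in>#shuf u v. g (z @ [a]))" for u v
  have sh: "(\<Sum>z\<in>#shuf u v. \<Sum>p\<in>#deconc z. Y (fst p) * g (snd p @ [a]))
      = (\<Sum>p\<in>#deconc u. \<Sum>q\<in>#deconc v. Y (fst p) * Y (fst q) * h (snd p) (snd q))" for u v
  proof -
    have "(\<Sum>z\<in>#shuf u v. \<Sum>p\<in>#deconc z. Y (fst p) * g (snd p @ [a]))
      = (\<Sum>p\<in>#deconc u. \<Sum>q\<in>#deconc v. \<Sum>z1\<in>#shuf (fst p) (fst q). \<Sum>z2\<in>#shuf (snd p) (snd q). Y z1 * g (z2 @ [a]))"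
      by (rule deconc_shuf)
    also have "\<dots> = (\<Sum>p\<in>#deconc u. \<Sum>q\<in>#deconc v. (\<Sum>z1\<in>#shuf (fst p) (fst q). Y z1) * h (snd p) (snd q))"
      unfolding h_def by (simp only: sum_mset_product)
    finally show ?thesis
      using mult unfolding lin_def by simp
  qed
  have "(\<Sum>w\<in>#arb (ts @ [PNode a cs]). \<Sum>p\<in>#deconc w. Y (fst p) * g (snd p))
    = (\<Sum>u\<in>#arb ts. \<Sum>v\<in>#arb cs. \<Sum>z\<in>#shuf u v. Y (z @ [a]) * g [])
      + (\<Sum>u\<in>#arb ts. \<Sum>v\<in>#arb cs. \<Sum>z\<in>#shuf u v. \<Sum>p\<in>#deconc z. Y (fst p) * g (snd p @ [a]))"
    unfolding sum_arb_snoc by (simp add: deconc_snoc multiset.map_comp o_def sum_mset.distrib)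
  also have "(\<Sum>u\<in>#arb ts. \<Sum>v\<in>#arb cs. \<Sum>z\<in>#shuf u v. Y (z @ [a]) * g []) = lin Y (arb (ts @ [PNode a cs])) * g []"
    unfolding lin_def sum_arb_snoc by (simp add: sum_mset_distrib_right)
  also have "(\<Sum>u\<in>#arb ts. \<Sum>v\<in>#arb cs. \<Sum>z\<in>#shuf u v. \<Sum>p\<in>#deconc z. Y (fst p) * g (snd p @ [a]))
     = (\<Sum>u\<in>#arb ts. \<Sum>p\<in>#deconc u. \<Sum>v\<in>#arb cs. \<Sum>q\<in>#deconc v. Y (fst p) * Y (fst q) * h (snd p) (snd q))"
    by (simp add: sh, rule arg_cong[where f = sum_mset], rule image_mset_cong, rule sum_mset.swap)
  finally show ?thesis
    unfolding h_def by (simp add: sum_mset_distrib_left mult.assoc)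
qed

text \<open>The Chen relation for the arborified path, with the right-hand factor kept as an
arbitrary linear form \<open>g\<close> so that the induction over the last tree goes through.\<close>

lemma chen_arb:
  assumes mult: "\<And>\<sigma> \<tau>. lin Y (shuf \<sigma> \<tau>) = Y \<sigma> * Y \<tau>" and unit: "Y [] = 1"
  shows "(\<Sum>D\<in>downsets f. comp_prod Y f (verts f - D) * (\<Sum>w\<in>#arb (restr f D). g w))
     = (\<Sum>w\<in>#arb f. \<Sum>p\<in>#deconc w. Y (fst p) * g (snd p))"
proof (induction f arbitrary: g rule: forest_snoc_induct)
  case Nil
  then show ?case by (simp add: downsets_Nil unit)
next
  case (snoc ts a cs)
  define f where "f = ts @ [PNode a cs]"
  define h where "h u v = (\<Sum>z\<in>#shuf u v. g (z @ [a]))" for u v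
  define k where "k u = (\<Sum>v\<in>#arb cs. \<Sum>q\<in>#deconc v. Y (fst q) * h u (snd q))" for u
  have inner: "(\<Sum>D2\<in>downsets cs. comp_prod Y cs (verts cs - D2) * (\<Sum>u\<in>#A. \<Sum>v\<in>#arb (restr cs D2). h u v))
      = (\<Sum>u\<in>#A. k u)" for A
    unfolding k_def snoc.IH(2)[symmetric]
    by (simp add: sum_mset_distrib_left sum_set_mset_swap)
  have "(\<Sum>D\<in>downsets f. comp_prod Y f (verts f - D) * (\<Sum>w\<in>#arb (restr f D). g w))
    = comp_prod Y f (verts f) * g [] + (\<Sum>D1\<in>downsets ts. \<Sum>D2\<in>downsets cs.
        comp_prod Y ts (verts ts - D1) * comp_prod Y cs (verts cs - D2) *
        (\<Sum>u\<in>#arb (restr ts D1). \<Sum>v\<in>#arb (restr cs D2). h u v))"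
    unfolding f_def sum_downsets_snoc
    by (simp add: comp_prod_snoc_downset restr_snoc_downset sum_arb_snoc h_def cong: sum.cong)
  also have "\<dots> = lin Y (arb f) * g [] + (\<Sum>D1\<in>downsets ts. comp_prod Y ts (verts ts - D1) *
      (\<Sum>D2\<in>downsets cs. comp_prod Y cs (verts cs - D2) *
        (\<Sum>u\<in>#arb (restr ts D1). \<Sum>v\<in>#arb (restr cs D2). h u v)))"
    unfolding f_def comp_prod_verts by (simp add: sum_distrib_left mult.assoc)
  also have "\<dots> = lin Y (arb f) * g [] +
      (\<Sum>D1\<in>downsets ts. comp_prod Y ts (verts ts - D1) * (\<Sum>u\<in>#arb (restr ts D1). k u))"
    by (simp only: inner)
  also have "\<dots> = (\<Sum>w\<in>#arb f. \<Sum>p\<in>#deconc w. Y (fst p) * g (snd p))"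
    unfolding snoc.IH(1) f_def sum_deconc_arb_snoc[OF mult] k_def h_def ..
  finally show ?case
    unfolding f_def .
qed

lemma lin_arb_shuf:
  assumes "\<And>\<sigma> \<tau>. lin X (shuf \<sigma> \<tau>) = X \<sigma> * X \<tau>"
  shows "lin (\<lambda>f. lin X (arb f)) (shuf \<sigma> \<tau>) = lin X (arb \<sigma>) * lin X (arb \<tau>)"
proof -
  have "lin (\<lambda>f. lin X (arb f)) (shuf \<sigma> \<tau>) = lin X (\<Sum>\<rho>\<in>#shuf \<sigma> \<tau>. arb \<rho>)"
    by (simp add: lin_sum_mset lin_def[of "\<lambda>f. lin X (arb f)"])
  also have "\<dots> = lin X (arb \<sigma>) * lin X (arb \<tau>)"
    by (simp add: arb_shuf lin_mshuf[OF assms])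
  finally show ?thesis .
qed

lemma sum_mset_sum: "(\<Sum>x\<in>#(\<Sum>i\<in>I. M i). f x) = (\<Sum>i\<in>I. \<Sum>x\<in>#M i. (f x :: 'c::comm_monoid_add))"
  by (induction I rule: infinite_finite_induct) auto

lemma chen_mkw_arb:
  assumes mult: "\<And>\<sigma> \<tau>. lin Y (shuf \<sigma> \<tau>) = Y \<sigma> * Y \<tau>" and unit: "Y [] = 1"
    and chen: "\<And>w. (\<Sum>p\<in>#deconc w. Y (fst p) * Z (snd p)) = W w"
  shows "(\<Sum>p\<in>#mkw_cop f. lin Y (arb (fst p)) * lin Z (arb (snd p))) = lin W (arb f)"
proof -
  have "lin (\<lambda>\<sigma>. lin Y (arb \<sigma>)) (shuf_comps f (verts f - D)) = comp_prod Y f (verts f - D)" for D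
    unfolding comp_prod_def
    by (rule lin_shuf_comps) (simp_all add: lin_arb_shuf[OF mult] unit finite_verts)
  moreover have "(\<Sum>p\<in>#mkw_cop f. lin Y (arb (fst p)) * lin Z (arb (snd p))) =
      (\<Sum>D\<in>downsets f. lin (\<lambda>\<sigma>. lin Y (arb \<sigma>)) (shuf_comps f (verts f - D)) * lin Z (arb (restr f D)))"
    unfolding mkw_cop_def downsets_def[symmetric] sum_mset_sum
    by (simp only: multiset.map_comp comp_def prod.sel lin_def[of "\<lambda>\<sigma>. lin Y (arb \<sigma>)"] sum_mset_distrib_right)
  ultimately have "(\<Sum>p\<in>#mkw_cop f. lin Y (arb (fst p)) * lin Z (arb (snd p)))
      = (\<Sum>D\<in>downsets f. comp_prod Y f (verts f - D) * (\<Sum>w\<in>#arb (restr f D). Z w))"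
    by (simp add: lin_def)
  also have "\<dots> = (\<Sum>w\<in>#arb f. \<Sum>p\<in>#deconc w. Y (fst p) * Z (snd p))"
    by (rule chen_arb[OF mult unit])
  also have "\<dots> = lin W (arb f)"
    by (simp add: chen lin_def)
  finally show ?thesis .
qed

lemma abs_sum_mset_le: "\<bar>\<Sum>x\<in>#M. (f x :: 'c::ordered_ab_group_add_abs)\<bar> \<le> (\<Sum>x\<in>#M. \<bar>f x\<bar>)"
  by (induction M) (auto intro: order_trans[OF abs_triangle_ineq])

lemma holder_bound_arb:
  assumes "\<And>w. \<exists>C. \<forall>s t. s \<noteq> t \<longrightarrow> \<bar>X s t w\<bar> \<le> C * \<bar>t - s\<bar> powr (\<gamma> * real (length w))"
  shows "\<exists>C. \<forall>s t. s \<noteq> t \<longrightarrow> \<bar>lin (X s t) (arb f)\<bar> \<le> C * \<bar>t - s\<bar> powr (\<gamma> * real (nverts f))"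
proof -
  obtain C where C: "\<And>w s t. s \<noteq> t \<Longrightarrow> \<bar>X s t w\<bar> \<le> C w * \<bar>t - s\<bar> powr (\<gamma> * real (length w))"
    using assms by metis
  have "\<bar>lin (X s t) (arb f)\<bar> \<le> (\<Sum>w\<in>#arb f. C w) * \<bar>t - s\<bar> powr (\<gamma> * real (nverts f))"
    if "s \<noteq> t" for s t
  proof -
    have "\<bar>lin (X s t) (arb f)\<bar> \<le> (\<Sum>w\<in>#arb f. \<bar>X s t w\<bar>)"
      unfolding lin_def by (rule abs_sum_mset_le)
    also have "\<dots> \<le> (\<Sum>w\<in>#arb f. C w * \<bar>t - s\<bar> powr (\<gamma> * real (nverts f)))"
      by (rule sum_mset_mono) (use C that arb_length in metis)
    finally show ?thesis
      by (simp add: sum_mset_distrib_right)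
  qed
  then show ?thesis by blast
qed

theorem mainTheorem12:
  fixes \<gamma> :: real and X :: "real \<Rightarrow> real \<Rightarrow> ('a::finite) list \<Rightarrow> real"
  assumes "0 < \<gamma>" and "\<gamma> \<le> 1"
    and "rough_path \<gamma> length shuf deconc [] X"
  shows "rough_path \<gamma> nverts shuf mkw_cop [] (\<lambda>s t f. lin (X s t) (arb f))"
proof -
  have unit: "\<And>s t. X s t [] = 1"
    and mult: "\<And>s t \<sigma> \<tau>. lin (X s t) (shuf \<sigma> \<tau>) = X s t \<sigma> * X s t \<tau>"
    and chen: "\<And>s u t w. (\<Sum>p\<in>#deconc w. X s u (fst p) * X u t (snd p)) = X s t w"
    and bound: "\<And>w. \<exists>C. \<forall>s t. s \<noteq> t \<longrightarrow> \<bar>X s t w\<bar> \<le> C * \<bar>t - s\<bar> powr (\<gamma> * real (length w))"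
    using assms(3) unfolding rough_path_def by blast+
  show ?thesis
    unfolding rough_path_def
    using unit lin_arb_shuf[OF mult] chen_mkw_arb[OF mult unit chen] holder_bound_arb[OF bound]
    by simp
qed

end
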